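(* Let $R$ be a solvable complex Leibniz algebra whose nilradical $N$ is isomorphic to one of $g^3_{(n,1)}$ ($n\ge7$), $g^1_7$, $g^2_9$, $g^3_{11}$, and with $\dim R=\dim N+1$. Then $R$ has a basis $\{e_1,\dots,e_m,x\}$ ($m=\dim N$) in which $\{e_1,\dots,e_m\}$ spans $N$ with the brackets of the corresponding algebra, and the brackets involving $x$ are as follows (all others involving $x$, including $[x,x]$, being zero): for $N=g^3_{(n,1)}$: $[e_1,x]=-[x,e_1]=e_1$, $[e_i,x]=-[x,e_i]=(i+1)e_i$ for $2\le i\le n-1$, $[e_n,x]=-[x,e_n]=2e_n$; for $N=g^1_7$: $[e_i,x]=-[x,e_i]=ie_i$, $1\le i\le7$; for $N=g^2_9$: $[e_i,x]=-[x,e_i]=ie_i$, $1\le i\le 9$; for $N=g^3_{11}$: $[e_i,x]=-[x,e_i]=ie_i$, $1\le i\le 11$.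
   Context: A Leibniz algebra is a complex vector space with a bilinear bracket satisfying $[u,[v,w]]=[[u,v],w]-[[u,w],v]$; solvable, nilpotent and nilradical (maximal nilpotent ideal) are defined via the derived and lower central series as usual. The following are Lie algebras; only listed brackets of basis elements and their antisymmetric counterparts are nonzero. $g^3_{(n,1)}$ ($n\ge7$), basis $e_1,\dots,e_n$: $[e_1,e_i]=e_{i+1}$ ($2\le i\le n-2$); $[e_i,e_n]=e_{i+2}$ ($2\le i\le n-3$); $[e_2,e_i]=e_{i+3}$ ($3\le i\le n-4$). $g^1_7$: $[e_1,e_i]=e_{i+1}$ ($2\le i\le 5$); $[e_2,e_i]=e_{i+2}$ ($3\le i\le 4$); $[e_i,e_{7-i}]=(-1)^ie_7$ ($2\le i\le 3$). $g^2_9$: $[e_1,e_i]=e_{i+1}$ ($2\le i\le 7$); $[e_2,e_i]=e_{i+2}$ ($3\le i\le 4$); $[e_2,e_5]=3e_7$; $[e_2,e_6]=5e_8$; $[e_3,e_i]=-2e_{i+3}$ ($4\le i\le5$); $[e_i,e_{9-i}]=(-1)^ie_9$ ($2\le i\le 4$). $g^3_{11}$: $[e_1,e_i]=e_{i+1}$ ($2\le i\le 9$); $[e_2,e_i]=e_{i+2}$ ($3\le i\le 4$); $[e_2,e_i]=-e_{i+2}$ ($6\le i\le 7$); $[e_3,e_7]=-e_{10}$; $[e_3,e_i]=e_{i+3}$ ($4\le i\le 5$); $[e_4,e_i]=e_{i+4}$ ($5\le i\le 6$); $[e_i,e_{11-i}]=(-1)^ie_{11}$ ($2\le i\le 5$).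 *)

theory Defs
  imports Main "HOL-Analysis.Analysis"
begin

definition bilinear_br :: "(complex \<Rightarrow> 'a \<Rightarrow> 'a) \<Rightarrow> ('a::ab_group_add \<Rightarrow> 'a \<Rightarrow> 'a) \<Rightarrow> bool" where
  "bilinear_br sc br \<longleftrightarrow>
     (\<forall>u v w. br (u + v) w = br u w + br v w) \<and>
     (\<forall>u v w. br u (v + w) = br u v + br u w) \<and>
     (\<forall>c u v. br (sc c u) v = sc c (br u v)) \<and>
     (\<forall>c u v. br u (sc c v) = sc c (br u v))"

definition leibniz_algebra :: "(complex \<Rightarrow> 'a \<Rightarrow> 'a) \<Rightarrow> ('a::ab_group_add \<Rightarrow> 'a \<Rightarrow> 'a) \<Rightarrow> bool" where
  "leibniz_algebra sc br \<longleftrightarrow> vector_space sc \<and> bilinear_br sc br \<and>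
     (\<forall>u v w. br u (br v w) = br (br u v) w - br (br u w) v)"

definition fin_dim :: "(complex \<Rightarrow> 'a::ab_group_add \<Rightarrow> 'a) \<Rightarrow> bool" where
  "fin_dim sc \<longleftrightarrow> (\<exists>B. finite B \<and> module.span sc B = UNIV)"

fun derived :: "(complex \<Rightarrow> 'a \<Rightarrow> 'a) \<Rightarrow> ('a::ab_group_add \<Rightarrow> 'a \<Rightarrow> 'a) \<Rightarrow> nat \<Rightarrow> 'a set" where
  "derived sc br 0 = UNIV"
| "derived sc br (Suc k) =
     module.span sc {br u v | u v. u \<in> derived sc br k \<and> v \<in> derived sc br k}"

definition solvable :: "(complex \<Rightarrow> 'a \<Rightarrow> 'a) \<Rightarrow> ('a::ab_group_add \<Rightarrow> 'a \<Rightarrow> 'a) \<Rightarrow> bool" where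
  "solvable sc br \<longleftrightarrow> (\<exists>k. derived sc br k = {0})"

fun lower_central :: "(complex \<Rightarrow> 'a \<Rightarrow> 'a) \<Rightarrow> ('a::ab_group_add \<Rightarrow> 'a \<Rightarrow> 'a) \<Rightarrow> 'a set \<Rightarrow> nat \<Rightarrow> 'a set" where
  "lower_central sc br I 0 = I"
| "lower_central sc br I (Suc k) =
     module.span sc {br u v | u v. u \<in> lower_central sc br I k \<and> v \<in> I}"

definition nilpotent_sub :: "(complex \<Rightarrow> 'a \<Rightarrow> 'a) \<Rightarrow> ('a::ab_group_add \<Rightarrow> 'a \<Rightarrow> 'a) \<Rightarrow> 'a set \<Rightarrow> bool" where
  "nilpotent_sub sc br I \<longleftrightarrow> (\<exists>k. lower_central sc br I k = {0})"

definition is_ideal :: "(complex \<Rightarrow> 'a \<Rightarrow> 'a) \<Rightarrow> ('a::ab_group_add \<Rightarrow> 'a \<Rightarrow> 'a) \<Rightarrow> 'a set \<Rightarrow> bool" where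
  "is_ideal sc br I \<longleftrightarrow> module.subspace sc I \<and> (\<forall>u\<in>I. \<forall>v. br u v \<in> I \<and> br v u \<in> I)"

definition is_nilradical :: "(complex \<Rightarrow> 'a \<Rightarrow> 'a) \<Rightarrow> ('a::ab_group_add \<Rightarrow> 'a \<Rightarrow> 'a) \<Rightarrow> 'a set \<Rightarrow> bool" where
  "is_nilradical sc br N \<longleftrightarrow> is_ideal sc br N \<and> nilpotent_sub sc br N \<and>
     (\<forall>I. is_ideal sc br I \<and> nilpotent_sub sc br I \<and> N \<subseteq> I \<longrightarrow> I = N)"

text \<open>The four nilpotent Lie algebras, given by structure constants on the
basis e_1,...,e_m: the coefficient of e_k in [e_i,e_j].  The function *_up
lists the brackets given in the paper; antisymmetry is added in model_sc.\<close>

datatype nil_type = G3 nat | G1_7 | G2_9 | G3_11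

fun nil_valid :: "nil_type \<Rightarrow> bool" where
  "nil_valid (G3 n) = (n \<ge> 7)"
| "nil_valid _ = True"

fun model_dim :: "nil_type \<Rightarrow> nat" where
  "model_dim (G3 n) = n"
| "model_dim G1_7 = 7"
| "model_dim G2_9 = 9"
| "model_dim G3_11 = 11"

definition up_g3 :: "nat \<Rightarrow> nat \<Rightarrow> nat \<Rightarrow> nat \<Rightarrow> complex" where
  "up_g3 n i j k =
     (if i = 1 \<and> 2 \<le> j \<and> j \<le> n - 2 \<and> k = j + 1 then 1 else 0)
   + (if 2 \<le> i \<and> i \<le> n - 3 \<and> j = n \<and> k = i + 2 then 1 else 0)
   + (if i = 2 \<and> 3 \<le> j \<and> j \<le> n - 4 \<and> k = j + 3 then 1 else 0)"

definition up_g17 :: "nat \<Rightarrow> nat \<Rightarrow> nat \<Rightarrow> complex" where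
  "up_g17 i j k =
     (if i = 1 \<and> 2 \<le> j \<and> j \<le> 5 \<and> k = j + 1 then 1 else 0)
   + (if i = 2 \<and> 3 \<le> j \<and> j \<le> 4 \<and> k = j + 2 then 1 else 0)
   + (if 2 \<le> i \<and> i \<le> 3 \<and> j = 7 - i \<and> k = 7 then (-1) ^ i else 0)"

definition up_g29 :: "nat \<Rightarrow> nat \<Rightarrow> nat \<Rightarrow> complex" where
  "up_g29 i j k =
     (if i = 1 \<and> 2 \<le> j \<and> j \<le> 7 \<and> k = j + 1 then 1 else 0)
   + (if i = 2 \<and> 3 \<le> j \<and> j \<le> 4 \<and> k = j + 2 then 1 else 0)
   + (if i = 2 \<and> j = 5 \<and> k = 7 then 3 else 0)
   + (if i = 2 \<and> j = 6 \<and> k = 8 then 5 else 0)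
   + (if i = 3 \<and> 4 \<le> j \<and> j \<le> 5 \<and> k = j + 3 then -2 else 0)
   + (if 2 \<le> i \<and> i \<le> 4 \<and> j = 9 - i \<and> k = 9 then (-1) ^ i else 0)"

definition up_g311 :: "nat \<Rightarrow> nat \<Rightarrow> nat \<Rightarrow> complex" where
  "up_g311 i j k =
     (if i = 1 \<and> 2 \<le> j \<and> j \<le> 9 \<and> k = j + 1 then 1 else 0)
   + (if i = 2 \<and> 3 \<le> j \<and> j \<le> 4 \<and> k = j + 2 then 1 else 0)
   + (if i = 2 \<and> 6 \<le> j \<and> j \<le> 7 \<and> k = j + 2 then -1 else 0)
   + (if i = 3 \<and> j = 7 \<and> k = 10 then -1 else 0)
   + (if i = 3 \<and> 4 \<le> j \<and> j \<le> 5 \<and> k = j + 3 then 1 else 0)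
   + (if i = 4 \<and> 5 \<le> j \<and> j \<le> 6 \<and> k = j + 4 then 1 else 0)
   + (if 2 \<le> i \<and> i \<le> 5 \<and> j = 11 - i \<and> k = 11 then (-1) ^ i else 0)"

fun model_up :: "nil_type \<Rightarrow> nat \<Rightarrow> nat \<Rightarrow> nat \<Rightarrow> complex" where
  "model_up (G3 n) = up_g3 n"
| "model_up G1_7 = up_g17"
| "model_up G2_9 = up_g29"
| "model_up G3_11 = up_g311"

definition model_sc :: "nil_type \<Rightarrow> nat \<Rightarrow> nat \<Rightarrow> nat \<Rightarrow> complex" where
  "model_sc t i j k = model_up t i j k - model_up t j i k"

definition model_carrier :: "nil_type \<Rightarrow> (nat \<Rightarrow> complex) set" where
  "model_carrier t = {v. \<forall>k. k \<notin> {1..model_dim t} \<longrightarrow> v k = 0}"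

definition model_br :: "nil_type \<Rightarrow> (nat \<Rightarrow> complex) \<Rightarrow> (nat \<Rightarrow> complex) \<Rightarrow> (nat \<Rightarrow> complex)" where
  "model_br t u v = (\<lambda>k. if k \<in> {1..model_dim t} then
      (\<Sum>i\<in>{1..model_dim t}. \<Sum>j\<in>{1..model_dim t}. u i * v j * model_sc t i j k) else 0)"

definition iso_to_model :: "(complex \<Rightarrow> 'a \<Rightarrow> 'a) \<Rightarrow> ('a::ab_group_add \<Rightarrow> 'a \<Rightarrow> 'a) \<Rightarrow> 'a set \<Rightarrow> nil_type \<Rightarrow> bool" where
  "iso_to_model sc br N t \<longleftrightarrow> (\<exists>\<phi> :: 'a \<Rightarrow> nat \<Rightarrow> complex.
      bij_betw \<phi> N (model_carrier t) \<and>
      (\<forall>u\<in>N. \<forall>v\<in>N. \<phi> (u + v) = (\<lambda>k. \<phi> u k + \<phi> v k)) \<and>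
      (\<forall>c. \<forall>u\<in>N. \<phi> (sc c u) = (\<lambda>k. c * \<phi> u k)) \<and>
      (\<forall>u\<in>N. \<forall>v\<in>N. \<phi> (br u v) = model_br t (\<phi> u) (\<phi> v)))"

text \<open>Weights of the action of x: [e_i,x] = w_i e_i.\<close>
fun model_wt :: "nil_type \<Rightarrow> nat \<Rightarrow> complex" where
  "model_wt (G3 n) i = (if i = 1 then 1 else if i = n then 2 else of_nat (i + 1))"
| "model_wt G1_7 i = of_nat i"
| "model_wt G2_9 i = of_nat i"
| "model_wt G3_11 i = of_nat i"

end

theory Submission
  imports Defs
begin

(* Grade the model algebra N by the weights w_i of the claimed action of x: a structure constant
   c_ij^k is nonzero only if w_k = w_i + w_j.  For y outside N, right multiplication by y is a
   derivation of N by the Leibniz identity, and every derivation of the four model algebras is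
   triangular for the grading, with diagonal a w_i for one scalar a.  If a = 0, right multiplication
   by y and bracketing with N both raise weights, so the whole algebra is nilpotent, contradicting
   the maximality of N.  Hence y can be rescaled to x with a = 1.  As the weights are pairwise
   distinct, a triangular change of basis diagonalises D = right multiplication by x, and the
   grading shows that the new basis has the same structure constants.  Left multiplication L by x
   is a derivation of N commuting with D, and [u,x] + [x,u] is a combination of Leibniz squares,
   which annihilate from the left; comparing eigenvalues gives L = -D.  Finally [x,x] lies in N and
   is killed by L, hence by D, whose eigenvalues w_i are positive; so [x,x] = 0. *)

section \<open>Weights of the model algebras\<close>

definition model_index :: "nil_type \<Rightarrow> nat set" where
  "model_index t = {1..model_dim t}"

fun weight :: "nil_type \<Rightarrow> nat \<Rightarrow> nat" where
  "weight (G3 n) i = (if i = 1 then 1 else if i = n then 2 else i + 1)"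
| "weight G1_7 i = i"
| "weight G2_9 i = i"
| "weight G3_11 i = i"

lemma model_wt_eq_weight: "model_wt t i = of_nat (weight t i)"
  by (cases t) auto

lemma finite_model_index [simp]: "finite (model_index t)"
  by (simp add: model_index_def)

lemma weight_pos: "nil_valid t \<Longrightarrow> i \<in> model_index t \<Longrightarrow> weight t i \<ge> 1"
  by (cases t) (auto simp: model_index_def)

lemma inj_on_weight: "nil_valid t \<Longrightarrow> inj_on (weight t) (model_index t)"
  by (cases t) (auto simp: inj_on_def model_index_def split: if_splits)

lemma weight_eq_imp_eq:
  "nil_valid t \<Longrightarrow> i \<in> model_index t \<Longrightarrow> j \<in> model_index t \<Longrightarrow> weight t i = weight t j \<Longrightarrow> i = j"
  using inj_on_weight by (metis inj_on_def)

lemma weight_bounded: "\<exists>B. \<forall>k\<in>model_index t. weight t k \<le> B"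
  by (rule exI[of _ "Max (weight t ` model_index t)"]) auto

lemma model_sc_antisym: "model_sc t i j k = - model_sc t j i k"
  by (simp add: model_sc_def)

lemma model_sc_weight:
  assumes "nil_valid t" "i \<in> model_index t" "j \<in> model_index t" "k \<in> model_index t"
    and "model_sc t i j k \<noteq> 0"
  shows "weight t k = weight t i + weight t j"
  using assms
  by (cases t) (auto simp: model_index_def model_sc_def up_g3_def up_g17_def up_g29_def up_g311_def
      split: if_splits)

lemma model_sc_target_unique:
  assumes "nil_valid t" "p \<in> model_index t" "q \<in> model_index t" "r \<in> model_index t" "k \<in> model_index t"
    and "model_sc t p q r \<noteq> 0" "model_sc t p q k \<noteq> 0"
  shows "k = r"
  using assms model_sc_weight[of t p q r] model_sc_weight[of t p q k] weight_eq_imp_eq[of t k r]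
  by simp

definition unit_vec :: "nat \<Rightarrow> nat \<Rightarrow> complex" where
  "unit_vec i = (\<lambda>k. if k = i then 1 else 0)"

lemma sum_mult_delta:
  fixes f g :: "nat \<Rightarrow> complex"
  assumes "finite A" "\<And>l. l \<in> A \<Longrightarrow> g l = (if l = p then c else 0)"
  shows "(\<Sum>l\<in>A. f l * g l) = (if p \<in> A then f p * c else 0)"
proof -
  have "(\<Sum>l\<in>A. f l * g l) = (\<Sum>l\<in>A. if l = p then f p * c else 0)"
    by (rule sum.cong) (auto simp: assms)
  also have "\<dots> = (if p \<in> A then f p * c else 0)"
    using assms(1) by (simp add: sum.delta)
  finally show ?thesis .
qed

lemma unit_vec_carrier: "i \<in> model_index t \<Longrightarrow> unit_vec i \<in> model_carrier t"
  by (auto simp: unit_vec_def model_carrier_def model_index_def)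

lemma model_carrier_add:
  "u \<in> model_carrier t \<Longrightarrow> v \<in> model_carrier t \<Longrightarrow> (\<lambda>k. u k + v k) \<in> model_carrier t"
  by (simp add: model_carrier_def)

lemma model_carrier_scale: "u \<in> model_carrier t \<Longrightarrow> (\<lambda>k. c * u k) \<in> model_carrier t"
  by (simp add: model_carrier_def)

lemma model_carrier_diff:
  "u \<in> model_carrier t \<Longrightarrow> v \<in> model_carrier t \<Longrightarrow> (\<lambda>k. u k - v k) \<in> model_carrier t"
  by (simp add: model_carrier_def)

lemma model_carrier_zero: "(\<lambda>k. 0) \<in> model_carrier t"
  by (simp add: model_carrier_def)

lemma model_carrier_sum:
  "(\<And>i. i \<in> S \<Longrightarrow> f i \<in> model_carrier t) \<Longrightarrow> (\<lambda>k. \<Sum>i\<in>S. c i * f i k) \<in> model_carrier t"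
  by (simp add: model_carrier_def)

lemma model_carrier_outside: "u \<in> model_carrier t \<Longrightarrow> k \<notin> model_index t \<Longrightarrow> u k = 0"
  by (simp add: model_carrier_def model_index_def)

lemma model_carrier_eqI:
  "u \<in> model_carrier t \<Longrightarrow> v \<in> model_carrier t \<Longrightarrow> (\<And>k. k \<in> model_index t \<Longrightarrow> u k = v k) \<Longrightarrow> u = v"
  by (rule ext, metis model_carrier_outside)

lemma inj_on_if_coords_independent:
  fixes G :: "nat \<Rightarrow> nat \<Rightarrow> complex"
  assumes indep: "\<forall>c. (\<lambda>k. \<Sum>i\<in>model_index t. c i * G i k) = (\<lambda>k. 0) \<longrightarrow> (\<forall>i\<in>model_index t. c i = 0)"
  shows "inj_on G (model_index t)"
proof (rule inj_onI, rule ccontr)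
  fix i j assume ij: "i \<in> model_index t" "j \<in> model_index t" "G i = G j" "i \<noteq> j"
  define c where "c = (\<lambda>l. (if l = i then 1 else 0) - (if l = j then 1 else (0::complex)))"
  have "(\<lambda>k. \<Sum>l\<in>model_index t. c l * G l k) = (\<lambda>k. G i k - G j k)"
    using ij by (simp add: c_def left_diff_distrib sum_subtractf if_distrib[of "\<lambda>x. x * _"] sum.delta
        cong: if_cong)
  also have "\<dots> = (\<lambda>k. 0)" using ij by simp
  finally have "c i = 0" using indep ij by blast
  then show False using ij by (simp add: c_def)
qed

lemma unit_vec_expansion:
  assumes u: "u \<in> model_carrier t"
  shows "u = (\<lambda>k. \<Sum>i\<in>model_index t. u i * unit_vec i k)"
proof
  fix k
  show "u k = (\<Sum>i\<in>model_index t. u i * unit_vec i k)"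
  proof (cases "k \<in> model_index t")
    case True
    then show ?thesis by (subst sum_mult_delta[where p = k and c = 1]) (auto simp: unit_vec_def)
  next
    case False
    then show ?thesis using model_carrier_outside[OF u False]
      by (auto simp: unit_vec_def intro!: sum.neutral)
  qed
qed

lemma model_br_carrier: "model_br t u v \<in> model_carrier t"
  by (auto simp: model_br_def model_carrier_def)

lemma model_br_outside: "k \<notin> model_index t \<Longrightarrow> model_br t u v k = 0"
  by (auto simp: model_br_def model_index_def)

lemma model_br_scale_left: "model_br t (\<lambda>k. c * u k) v = (\<lambda>k. c * model_br t u v k)"
  by (auto simp: model_br_def sum_distrib_left mult_ac)

lemma model_br_scale_right: "model_br t u (\<lambda>k. c * v k) = (\<lambda>k. c * model_br t u v k)"
  by (auto simp: model_br_def sum_distrib_left mult_ac)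

lemma model_br_antisym: "model_br t u v = (\<lambda>k. - model_br t v u k)"
proof
  fix k
  have "(\<Sum>i\<in>{1..model_dim t}. \<Sum>j\<in>{1..model_dim t}. u i * v j * model_sc t i j k) =
        (\<Sum>j\<in>{1..model_dim t}. \<Sum>i\<in>{1..model_dim t}. u i * v j * model_sc t i j k)"
    by (rule sum.swap)
  also have "\<dots> = - (\<Sum>i\<in>{1..model_dim t}. \<Sum>j\<in>{1..model_dim t}. v i * u j * model_sc t i j k)"
  proof -
    have "\<And>i j. u i * v j * model_sc t i j k = - (v j * u i * model_sc t j i k)"
      using model_sc_antisym[of t] by (metis mult.commute mult_minus_right)
    then show ?thesis by (simp add: sum_negf[symmetric])
  qed
  finally show "model_br t u v k = - model_br t v u k" by (simp add: model_br_def)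
qed

lemma model_br_unit_right:
  assumes "j \<in> model_index t" "k \<in> model_index t"
  shows "model_br t u (unit_vec j) k = (\<Sum>i\<in>model_index t. u i * model_sc t i j k)"
proof -
  have "model_br t u (unit_vec j) k =
      (\<Sum>i\<in>model_index t. \<Sum>j'\<in>model_index t. (u i * model_sc t i j' k) * unit_vec j j')"
    using assms by (simp add: model_br_def model_index_def mult_ac)
  also have "\<dots> = (\<Sum>i\<in>model_index t. u i * model_sc t i j k)"
    by (intro sum.cong refl, subst sum_mult_delta[where p = j and c = 1]) (auto simp: unit_vec_def assms)
  finally show ?thesis .
qed

lemma model_br_unit_left:
  assumes "i \<in> model_index t" "k \<in> model_index t"
  shows "model_br t (unit_vec i) v k = (\<Sum>j\<in>model_index t. v j * model_sc t i j k)"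
proof -
  have "model_br t (unit_vec i) v k =
      (\<Sum>i'\<in>model_index t. (\<Sum>j\<in>model_index t. v j * model_sc t i' j k) * unit_vec i i')"
    using assms by (simp add: model_br_def model_index_def sum_distrib_right sum_distrib_left mult_ac)
  also have "\<dots> = (\<Sum>j\<in>model_index t. v j * model_sc t i j k)"
    by (subst sum_mult_delta[where p = i and c = 1]) (auto simp: unit_vec_def assms)
  finally show ?thesis .
qed

lemma model_br_unit_unit:
  "model_br t (unit_vec i) (unit_vec j) k =
     (if k \<in> model_index t \<and> i \<in> model_index t \<and> j \<in> model_index t then model_sc t i j k else 0)"
proof (cases "k \<in> model_index t \<and> i \<in> model_index t \<and> j \<in> model_index t")
  case True
  then show ?thesis
    by (simp add: model_br_unit_right, subst mult.commute, subst sum_mult_delta[where p = i and c = 1])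
       (auto simp: unit_vec_def)
next
  case False
  show ?thesis
  proof (cases "k \<in> model_index t")
    case True
    have "model_br t (unit_vec i) (unit_vec j) k = (\<Sum>i'\<in>model_index t. \<Sum>j'\<in>model_index t.
        unit_vec i i' * unit_vec j j' * model_sc t i' j' k)"
      using True by (simp add: model_br_def model_index_def)
    also have "\<dots> = 0"
      by (rule sum.neutral, intro ballI, rule sum.neutral) (use False True in \<open>auto simp: unit_vec_def\<close>)
    finally show ?thesis using False by auto
  qed (simp add: model_br_outside)
qed

lemma model_br_unit_single:
  assumes v: "nil_valid t" and pqr: "p \<in> model_index t" "q \<in> model_index t" "r \<in> model_index t"
    and sc: "model_sc t p q r \<noteq> 0"
  shows "model_br t (unit_vec p) (unit_vec q) = (\<lambda>k. model_sc t p q r * unit_vec r k)"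
proof
  fix k
  show "model_br t (unit_vec p) (unit_vec q) k = model_sc t p q r * unit_vec r k"
  proof (cases "k \<in> model_index t \<and> k \<noteq> r \<and> model_sc t p q k \<noteq> 0")
    case True
    then show ?thesis using model_sc_target_unique[OF v pqr _ sc] by blast
  qed (use pqr in \<open>simp add: model_br_unit_unit, auto simp: unit_vec_def\<close>)
qed

section \<open>Derivations of the model algebras\<close>

definition model_linear :: "nil_type \<Rightarrow> ((nat \<Rightarrow> complex) \<Rightarrow> (nat \<Rightarrow> complex)) \<Rightarrow> bool" where
  "model_linear t D \<longleftrightarrow> (\<forall>u\<in>model_carrier t. D u \<in> model_carrier t) \<and>
     (\<forall>u\<in>model_carrier t. \<forall>v\<in>model_carrier t. D (\<lambda>k. u k + v k) = (\<lambda>k. D u k + D v k)) \<and>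
     (\<forall>c. \<forall>u\<in>model_carrier t. D (\<lambda>k. c * u k) = (\<lambda>k. c * D u k))"

definition model_derivation :: "nil_type \<Rightarrow> ((nat \<Rightarrow> complex) \<Rightarrow> (nat \<Rightarrow> complex)) \<Rightarrow> bool" where
  "model_derivation t D \<longleftrightarrow> model_linear t D \<and>
     (\<forall>u\<in>model_carrier t. \<forall>v\<in>model_carrier t.
        D (model_br t u v) = (\<lambda>k. model_br t (D u) v k + model_br t u (D v) k))"

lemma model_derivation_linear: "model_derivation t D \<Longrightarrow> model_linear t D"
  by (simp add: model_derivation_def)

lemma model_derivation_br:
  "model_derivation t D \<Longrightarrow> u \<in> model_carrier t \<Longrightarrow> v \<in> model_carrier t \<Longrightarrow>
     D (model_br t u v) = (\<lambda>k. model_br t (D u) v k + model_br t u (D v) k)"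
  by (simp add: model_derivation_def)

lemma model_linear_carrier: "model_linear t D \<Longrightarrow> u \<in> model_carrier t \<Longrightarrow> D u \<in> model_carrier t"
  by (simp add: model_linear_def)

lemma model_linear_add:
  "model_linear t D \<Longrightarrow> u \<in> model_carrier t \<Longrightarrow> v \<in> model_carrier t \<Longrightarrow>
     D (\<lambda>k. u k + v k) = (\<lambda>k. D u k + D v k)"
  by (simp add: model_linear_def)

lemma model_linear_scale:
  "model_linear t D \<Longrightarrow> u \<in> model_carrier t \<Longrightarrow> D (\<lambda>k. c * u k) = (\<lambda>k. c * D u k)"
  by (simp add: model_linear_def)

lemma model_linear_zero: "model_linear t D \<Longrightarrow> D (\<lambda>k. 0) = (\<lambda>k. 0)"
  using model_linear_scale[of t D "\<lambda>k. 0" 0] model_carrier_zero by simp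

lemma model_linear_diff:
  assumes l: "model_linear t D" and u: "u \<in> model_carrier t" and v: "v \<in> model_carrier t"
  shows "D (\<lambda>k. u k - v k) = (\<lambda>k. D u k - D v k)"
proof -
  have "D (\<lambda>k. u k - v k) = D (\<lambda>k. u k + (\<lambda>k. (-1) * v k) k)" by simp
  also have "\<dots> = (\<lambda>k. D u k + D (\<lambda>k. (-1) * v k) k)"
    by (rule model_linear_add[OF l u model_carrier_scale[OF v]])
  also have "\<dots> = (\<lambda>k. D u k - D v k)" using model_linear_scale[OF l v, of "-1"] by simp
  finally show ?thesis .
qed

lemma model_linear_sum:
  assumes l: "model_linear t D" and S: "finite S" and f: "\<And>i. i \<in> S \<Longrightarrow> f i \<in> model_carrier t"
  shows "D (\<lambda>k. \<Sum>i\<in>S. c i * f i k) = (\<lambda>k. \<Sum>i\<in>S. c i * D (f i) k)"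
  using S f
proof (induction S rule: finite_induct)
  case empty then show ?case using model_linear_zero[OF l] by simp
next
  case (insert x F)
  have "D (\<lambda>k. \<Sum>i\<in>insert x F. c i * f i k) = D (\<lambda>k. (\<lambda>k. c x * f x k) k + (\<lambda>k. \<Sum>i\<in>F. c i * f i k) k)"
    using insert by simp
  also have "\<dots> = (\<lambda>k. D (\<lambda>k. c x * f x k) k + D (\<lambda>k. \<Sum>i\<in>F. c i * f i k) k)"
    by (rule model_linear_add[OF l]) (use insert in \<open>auto intro!: model_carrier_scale model_carrier_sum\<close>)
  also have "\<dots> = (\<lambda>k. \<Sum>i\<in>insert x F. c i * D (f i) k)"
    using insert model_linear_scale[OF l, of "f x" "c x"] by simp
  finally show ?case .
qed

lemma model_linear_expansion:
  assumes l: "model_linear t D" and u: "u \<in> model_carrier t"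
  shows "D u = (\<lambda>k. \<Sum>i\<in>model_index t. u i * D (unit_vec i) k)"
proof -
  have "D u = D (\<lambda>k. \<Sum>i\<in>model_index t. u i * unit_vec i k)" using unit_vec_expansion[OF u] by simp
  also have "\<dots> = (\<lambda>k. \<Sum>i\<in>model_index t. u i * D (unit_vec i) k)"
    by (rule model_linear_sum[OF l]) (auto intro: unit_vec_carrier)
  finally show ?thesis .
qed

lemma derivation_unit_coeff:
  assumes D: "model_derivation t D" and v: "nil_valid t"
    and pqrk: "p \<in> model_index t" "q \<in> model_index t" "r \<in> model_index t" "k \<in> model_index t"
    and sc: "model_sc t p q r \<noteq> 0"
  shows "model_sc t p q r * D (unit_vec r) k =
    (\<Sum>l\<in>model_index t. D (unit_vec p) l * model_sc t l q k) +
    (\<Sum>l\<in>model_index t. D (unit_vec q) l * model_sc t p l k)"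
proof -
  have "(\<lambda>k. model_sc t p q r * D (unit_vec r) k) = D (model_br t (unit_vec p) (unit_vec q))"
    using model_linear_scale[OF model_derivation_linear[OF D] unit_vec_carrier[OF pqrk(3)]]
    by (simp add: model_br_unit_single[OF v pqrk(1-3) sc])
  also have "\<dots> =
      (\<lambda>k. model_br t (D (unit_vec p)) (unit_vec q) k + model_br t (unit_vec p) (D (unit_vec q)) k)"
    using model_derivation_br[OF D] pqrk by (simp add: unit_vec_carrier)
  finally show ?thesis
    by (metis model_br_unit_right[OF pqrk(2,4)] model_br_unit_left[OF pqrk(1,4)])
qed

lemma derivation_unit_coeff_single:
  assumes D: "model_derivation t D" and v: "nil_valid t"
    and pqrk: "p \<in> model_index t" "q \<in> model_index t" "r \<in> model_index t" "k \<in> model_index t"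
    and sc: "model_sc t p q r = c" "c \<noteq> 0"
    and s1: "\<forall>l\<in>model_index t. model_sc t l q k = (if l = l1 then c1 else 0)"
    and s2: "\<forall>l\<in>model_index t. model_sc t p l k = (if l = l2 then c2 else 0)"
  shows "c * D (unit_vec r) k = (if l1 \<in> model_index t then D (unit_vec p) l1 * c1 else 0) +
                               (if l2 \<in> model_index t then D (unit_vec q) l2 * c2 else 0)"
  using derivation_unit_coeff[OF D v pqrk] sc s1 s2
    sum_mult_delta[of "model_index t" "\<lambda>l. model_sc t l q k" l1 c1 "D (unit_vec p)"]
    sum_mult_delta[of "model_index t" "\<lambda>l. model_sc t p l k" l2 c2 "D (unit_vec q)"]
  by simp

definition weight_triangular ::
    "nil_type \<Rightarrow> ((nat \<Rightarrow> complex) \<Rightarrow> (nat \<Rightarrow> complex)) \<Rightarrow> complex \<Rightarrow> nat \<Rightarrow> bool" where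
  "weight_triangular t D a i \<longleftrightarrow> (\<forall>k\<in>model_index t. weight t k \<le> weight t i \<longrightarrow>
      D (unit_vec i) k = (if k = i then a * of_nat (weight t i) else 0))"

lemma weight_triangular_sum:
  assumes v: "nil_valid t" and pqk: "p \<in> model_index t" "q \<in> model_index t" "k \<in> model_index t"
    and k: "weight t k \<le> weight t p + weight t q" and tri: "weight_triangular t D a p"
  shows "(\<Sum>l\<in>model_index t. D (unit_vec p) l * model_sc t l q k) =
      a * of_nat (weight t p) * model_sc t p q k"
proof -
  have "(\<Sum>l\<in>model_index t. D (unit_vec p) l * model_sc t l q k) =
      (\<Sum>l\<in>model_index t. (a * of_nat (weight t p) * model_sc t p q k) * unit_vec p l)"
  proof (rule sum.cong[OF refl])
    fix l assume l: "l \<in> model_index t"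
    show "D (unit_vec p) l * model_sc t l q k =
        (a * of_nat (weight t p) * model_sc t p q k) * unit_vec p l"
    proof (cases "l \<noteq> p \<and> model_sc t l q k \<noteq> 0")
      case True
      then have "weight t l \<le> weight t p" using model_sc_weight[OF v l pqk(2,3)] k by simp
      then show ?thesis using tri l True by (simp add: weight_triangular_def unit_vec_def)
    qed (use tri l in \<open>auto simp: weight_triangular_def unit_vec_def\<close>)
  qed
  also have "\<dots> = a * of_nat (weight t p) * model_sc t p q k"
    by (subst sum_mult_delta[where p = p and c = 1]) (auto simp: unit_vec_def pqk)
  finally show ?thesis .
qed

lemma weight_triangular_br:
  assumes D: "model_derivation t D" and v: "nil_valid t"
    and pqr: "p \<in> model_index t" "q \<in> model_index t" "r \<in> model_index t"
    and sc: "model_sc t p q r \<noteq> 0"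
    and tp: "weight_triangular t D a p" and tq: "weight_triangular t D a q"
  shows "weight_triangular t D a r"
  unfolding weight_triangular_def
proof (intro ballI impI)
  fix k assume k: "k \<in> model_index t" "weight t k \<le> weight t r"
  have wr: "weight t r = weight t p + weight t q" using model_sc_weight[OF v pqr sc] .
  have S1: "(\<Sum>l\<in>model_index t. D (unit_vec p) l * model_sc t l q k) =
      a * of_nat (weight t p) * model_sc t p q k"
    by (rule weight_triangular_sum[OF v pqr(1,2) k(1) _ tp]) (use k wr in simp)
  have "(\<Sum>l\<in>model_index t. D (unit_vec q) l * model_sc t p l k) =
      - (\<Sum>l\<in>model_index t. D (unit_vec q) l * model_sc t l p k)"
    by (simp add: model_sc_antisym[of t p] sum_negf[symmetric])
  also have "(\<Sum>l\<in>model_index t. D (unit_vec q) l * model_sc t l p k) =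
      a * of_nat (weight t q) * model_sc t q p k"
    by (rule weight_triangular_sum[OF v pqr(2,1) k(1) _ tq]) (use k wr in simp)
  finally have S2: "(\<Sum>l\<in>model_index t. D (unit_vec q) l * model_sc t p l k) =
      a * of_nat (weight t q) * model_sc t p q k"
    by (simp add: model_sc_antisym[of t q p k])
  have e: "model_sc t p q r * D (unit_vec r) k = a * of_nat (weight t r) * model_sc t p q k"
    using derivation_unit_coeff[OF D v pqr k(1) sc] S1 S2 by (simp add: wr algebra_simps)
  show "D (unit_vec r) k = (if k = r then a * of_nat (weight t r) else 0)"
  proof (cases "k = r")
    case False
    then have "model_sc t p q k = 0" using model_sc_target_unique[OF v pqr k(1) sc] by blast
    then show ?thesis using e sc False by simp
  qed (use e sc in simp)
qed

lemma weight_triangular_upto: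
  assumes D: "model_derivation t D" and v: "nil_valid t" and b: "b \<le> model_dim t"
    and t1: "weight_triangular t D a 1" and t2: "weight_triangular t D a 2"
    and succ: "\<And>i. 2 \<le> i \<Longrightarrow> i < b \<Longrightarrow> model_sc t 1 i (Suc i) \<noteq> 0"
  shows "2 \<le> i \<Longrightarrow> i \<le> b \<Longrightarrow> weight_triangular t D a i"
proof (induction i rule: dec_induct)
  case (step i)
  have "1 \<in> model_index t" "i \<in> model_index t" "Suc i \<in> model_index t"
    using step b by (auto simp: model_index_def)
  then show ?case using weight_triangular_br[OF D v, of 1 i "Suc i" a] step t1 succ by simp
qed (rule t2)

text \<open>In the next two proofs each relation \<open>e\<^sub>i\<close> is one coordinate of the Leibniz rule
  \<open>D [e\<^sub>p, e\<^sub>q] = [D e\<^sub>p, e\<^sub>q] + [e\<^sub>p, D e\<^sub>q]\<close> for a bracket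
  \<open>[e\<^sub>p, e\<^sub>q] = c e\<^sub>r\<close>.\<close>

lemma derivation_G3_coeffs:
  assumes D: "model_derivation (G3 n) D" and n: "7 \<le> n"
  shows "D (unit_vec 2) 1 = 0" "D (unit_vec 2) n = 0" "D (unit_vec n) 1 = 0"
    "D (unit_vec 2) 2 = 3 * D (unit_vec 1) 1" "D (unit_vec n) n = 2 * D (unit_vec 1) 1"
proof -
  have v: "nil_valid (G3 n)" using n by simp
  have R: "model_index (G3 n) = {1..n}" by (simp add: model_index_def)
  have E: "\<And>p q r k c l1 c1 l2 c2 X. p \<in> {1..n} \<Longrightarrow> q \<in> {1..n} \<Longrightarrow> r \<in> {1..n} \<Longrightarrow> k \<in> {1..n} \<Longrightarrow>
     model_sc (G3 n) p q r = c \<Longrightarrow> c \<noteq> 0 \<Longrightarrow>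
     \<forall>l\<in>{1..n}. model_sc (G3 n) l q k = (if l = l1 then c1 else 0) \<Longrightarrow>
     \<forall>l\<in>{1..n}. model_sc (G3 n) p l k = (if l = l2 then c2 else 0) \<Longrightarrow>
     X = (if l1 \<in> {1..n} then D (unit_vec p) l1 * c1 else 0) +
         (if l2 \<in> {1..n} then D (unit_vec q) l2 * c2 else 0) \<Longrightarrow>
     c * D (unit_vec r) k = X"
    using derivation_unit_coeff_single[OF D v] unfolding R by blast
  note U = model_sc_def up_g3_def
  have e1: "1 * D (unit_vec 3) 2 = 0" by (rule E[of 1 2 _ _ _ 0 0 0 0]) (use n in \<open>auto simp: U\<close>)
  have e2: "1 * D (unit_vec 3) 3 = D (unit_vec 1) 1 * 1 + D (unit_vec 2) 2 * 1"
    by (rule E[of 1 2 _ _ _ 1 1 2 1]) (use n in \<open>auto simp: U\<close>)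
  have e3: "1 * D (unit_vec 3) n = 0" by (rule E[of 1 2 _ _ _ 0 0 0 0]) (use n in \<open>auto simp: U\<close>)
  have e4: "1 * D (unit_vec 4) 2 = 0" by (rule E[of 1 3 _ _ _ 0 0 0 0]) (use n in \<open>auto simp: U\<close>)
  have e5: "1 * D (unit_vec 4) 3 = D (unit_vec 3) 2 * 1"
    by (rule E[of 1 3 _ _ _ 0 0 2 1]) (use n in \<open>auto simp: U\<close>)
  have e6: "1 * D (unit_vec 4) 4 = D (unit_vec 1) 1 * 1 + D (unit_vec 3) 3 * 1"
    by (rule E[of 1 3 _ _ _ 1 1 3 1]) (use n in \<open>auto simp: U\<close>)
  have e7: "1 * D (unit_vec 5) 3 = D (unit_vec 4) 2 * 1"
    by (rule E[of 1 4 _ _ _ 0 0 2 1]) (use n in \<open>auto simp: U\<close>)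
  have e8: "1 * D (unit_vec 5) 4 = D (unit_vec 4) 3 * 1"
    by (rule E[of 1 4 _ _ _ 0 0 3 1]) (use n in \<open>auto simp: U\<close>)
  have e9: "1 * D (unit_vec 5) 5 = D (unit_vec 1) 1 * 1 + D (unit_vec 4) 4 * 1"
    by (rule E[of 1 4 _ _ _ 1 1 4 1]) (use n in \<open>auto simp: U\<close>)
  have e10: "1 * D (unit_vec 6) 4 = D (unit_vec 5) 3 * 1"
    by (rule E[of 1 5 _ _ _ 0 0 3 1]) (use n in \<open>auto simp: U\<close>)
  have e11: "1 * D (unit_vec 6) 5 = D (unit_vec 5) 4 * 1"
    by (rule E[of 1 5 _ _ _ 0 0 4 1]) (use n in \<open>auto simp: U\<close>)
  have e12: "1 * D (unit_vec 6) 6 = D (unit_vec 1) 1 * 1 + D (unit_vec 5) 5 * 1"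
    by (rule E[of 1 5 _ _ _ 1 1 5 1]) (use n in \<open>auto simp: U\<close>)
  have e13: "1 * D (unit_vec 4) 3 = D (unit_vec n) 1 * -1"
    by (rule E[of 2 n _ _ _ 0 0 1 "-1"]) (use n in \<open>auto simp: U\<close>)
  have e14: "1 * D (unit_vec 4) 4 = D (unit_vec 2) 2 * 1 + D (unit_vec n) n * 1"
    by (rule E[of 2 n _ _ _ 2 1 n 1]) (use n in \<open>auto simp: U\<close>)
  have e15: "1 * D (unit_vec 6) 4 = D (unit_vec 2) 1 * 1 + D (unit_vec 3) n * 1"
    by (rule E[of 2 3 _ _ _ 1 1 n 1]) (use n in \<open>auto simp: U\<close>)
  have e16: "1 * D (unit_vec 6) 5 = D (unit_vec 2) n * -1"
    by (rule E[of 2 3 _ _ _ n "-1" 0 0]) (use n in \<open>auto simp: U\<close>)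
  have e17: "1 * D (unit_vec 6) 6 = D (unit_vec 2) 2 * 1 + D (unit_vec 3) 3 * 1"
    by (rule E[of 2 3 _ _ _ 2 1 3 1]) (use n in \<open>auto simp: U\<close>)
  show "D (unit_vec 2) 1 = 0" using e1 e3 e4 e7 e10 e15 by simp
  show "D (unit_vec 2) n = 0" using e1 e5 e8 e11 e16 by simp
  show "D (unit_vec n) 1 = 0" using e1 e5 e13 by simp
  show d22: "D (unit_vec 2) 2 = 3 * D (unit_vec 1) 1" using e2 e6 e9 e12 e17 by (simp add: algebra_simps)
  show "D (unit_vec n) n = 2 * D (unit_vec 1) 1" using e2 e6 e14 d22 by (simp add: algebra_simps)
qed

lemma weight_triangular_one:
  "nil_valid t \<Longrightarrow> weight_triangular t D (D (unit_vec 1) 1) 1"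
  using weight_pos[of t] by (cases t) (auto simp: weight_triangular_def model_index_def)

lemma derivation_weight_triangular_G3:
  assumes D: "model_derivation (G3 n) D" and n: "7 \<le> n" and i: "i \<in> model_index (G3 n)"
  shows "weight_triangular (G3 n) D (D (unit_vec 1) 1) i"
proof -
  have v: "nil_valid (G3 n)" using n by simp
  note c = derivation_G3_coeffs[OF D n]
  have t1: "weight_triangular (G3 n) D (D (unit_vec 1) 1) 1" by (rule weight_triangular_one[OF v])
  have t2: "weight_triangular (G3 n) D (D (unit_vec 1) 1) 2"
    using n c by (auto simp: weight_triangular_def model_index_def)
  have tn: "weight_triangular (G3 n) D (D (unit_vec 1) 1) n"
    using n c by (auto simp: weight_triangular_def model_index_def split: if_splits)
  have ti: "weight_triangular (G3 n) D (D (unit_vec 1) 1) i" if "2 \<le> i" "i \<le> n - 1" for i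
    by (rule weight_triangular_upto[OF D v _ t1 t2 _ that])
       (use n in \<open>auto simp: model_sc_def up_g3_def\<close>)
  show ?thesis
  proof (cases "i = 1")
    case False
    then show ?thesis using tn ti i by (cases "i = n") (auto simp: model_index_def)
  qed (use t1 in simp)
qed

lemma derivation_exceptional_coeffs:
  assumes D: "model_derivation t D" and t: "t = G1_7 \<or> t = G2_9 \<or> t = G3_11"
  shows "D (unit_vec 2) 1 = 0" "D (unit_vec 2) 2 = 2 * D (unit_vec 1) 1"
proof -
  have v: "nil_valid t" using t by auto
  define m where "m = model_dim t"
  have R: "model_index t = {1..m}" by (simp add: model_index_def m_def)
  have E: "\<And>p q r k c l1 c1 l2 c2 X. p \<in> {1..m} \<Longrightarrow> q \<in> {1..m} \<Longrightarrow> r \<in> {1..m} \<Longrightarrow> k \<in> {1..m} \<Longrightarrow>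
     model_sc t p q r = c \<Longrightarrow> c \<noteq> 0 \<Longrightarrow>
     \<forall>l\<in>{1..m}. model_sc t l q k = (if l = l1 then c1 else 0) \<Longrightarrow>
     \<forall>l\<in>{1..m}. model_sc t p l k = (if l = l2 then c2 else 0) \<Longrightarrow>
     X = (if l1 \<in> {1..m} then D (unit_vec p) l1 * c1 else 0) +
         (if l2 \<in> {1..m} then D (unit_vec q) l2 * c2 else 0) \<Longrightarrow>
     c * D (unit_vec r) k = X"
    using derivation_unit_coeff_single[OF D v] unfolding R by blast
  note U = model_sc_def up_g17_def up_g29_def up_g311_def
  have e1: "1 * D (unit_vec 3) 2 = 0" by (rule E[of 1 2 _ _ _ 0 0 0 0]) (use t m_def in \<open>auto simp: U\<close>)
  have e2: "1 * D (unit_vec 4) 3 = D (unit_vec 3) 2 * 1"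
    by (rule E[of 1 3 _ _ _ 0 0 2 1]) (use t m_def in \<open>auto simp: U\<close>)
  have e3: "1 * D (unit_vec 5) 4 = D (unit_vec 4) 3 * 1"
    by (rule E[of 1 4 _ _ _ 0 0 3 1]) (use t m_def in \<open>auto simp: U\<close>)
  have e4: "1 * D (unit_vec 5) 4 = D (unit_vec 2) 1 * 1"
    by (rule E[of 2 3 _ _ _ 1 1 0 0]) (use t m_def in \<open>auto simp: U\<close>)
  have e5: "1 * D (unit_vec 3) 3 = D (unit_vec 1) 1 * 1 + D (unit_vec 2) 2 * 1"
    by (rule E[of 1 2 _ _ _ 1 1 2 1]) (use t m_def in \<open>auto simp: U\<close>)
  have e6: "1 * D (unit_vec 4) 4 = D (unit_vec 1) 1 * 1 + D (unit_vec 3) 3 * 1"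
    by (rule E[of 1 3 _ _ _ 1 1 3 1]) (use t m_def in \<open>auto simp: U\<close>)
  have e7: "1 * D (unit_vec 5) 5 = D (unit_vec 1) 1 * 1 + D (unit_vec 4) 4 * 1"
    by (rule E[of 1 4 _ _ _ 1 1 4 1]) (use t m_def in \<open>auto simp: U\<close>)
  have e8: "1 * D (unit_vec 5) 5 = D (unit_vec 2) 2 * 1 + D (unit_vec 3) 3 * 1"
    by (rule E[of 2 3 _ _ _ 2 1 3 1]) (use t m_def in \<open>auto simp: U\<close>)
  show "D (unit_vec 2) 1 = 0" using e1 e2 e3 e4 by simp
  show "D (unit_vec 2) 2 = 2 * D (unit_vec 1) 1" using e5 e6 e7 e8 by (simp add: algebra_simps)
qed

lemma derivation_weight_triangular_exceptional:
  assumes D: "model_derivation t D" and t: "t = G1_7 \<or> t = G2_9 \<or> t = G3_11" and i: "i \<in> model_index t"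
  shows "weight_triangular t D (D (unit_vec 1) 1) i"
proof -
  have v: "nil_valid t" using t by auto
  define m where "m = model_dim t"
  have m: "m = 7 \<or> m = 9 \<or> m = 11" using t by (auto simp: m_def)
  note c = derivation_exceptional_coeffs[OF D t]
  have t1: "weight_triangular t D (D (unit_vec 1) 1) 1" by (rule weight_triangular_one[OF v])
  have t2: "weight_triangular t D (D (unit_vec 1) 1) 2"
    using t c by (auto simp: weight_triangular_def model_index_def le_Suc_eq numeral_2_eq_2)
  have ti: "weight_triangular t D (D (unit_vec 1) 1) i" if "2 \<le> i" "i \<le> m - 1" for i
    by (rule weight_triangular_upto[OF D v _ t1 t2 _ that])
       (use t m_def in \<open>auto simp: model_sc_def up_g17_def up_g29_def up_g311_def\<close>)
  have "model_sc t 2 (m - 2) m \<noteq> 0"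
    using t m_def by (auto simp: model_sc_def up_g17_def up_g29_def up_g311_def)
  then have tm: "weight_triangular t D (D (unit_vec 1) 1) m"
    using weight_triangular_br[OF D v, of 2 "m - 2" m] t2 ti[of "m - 2"] m
    by (auto simp: model_index_def m_def)
  show ?thesis
  proof (cases "i = 1")
    case False
    then show ?thesis using tm ti i by (cases "i = m") (auto simp: model_index_def m_def)
  qed (use t1 in simp)
qed

lemma model_derivation_weight_triangular:
  assumes "model_derivation t D" "nil_valid t" "i \<in> model_index t"
  shows "weight_triangular t D (D (unit_vec 1) 1) i"
  using assms derivation_weight_triangular_G3 derivation_weight_triangular_exceptional
  by (cases t) auto

section \<open>Diagonalising a normalised derivation\<close>

definition weight_normalized :: "nil_type \<Rightarrow> ((nat \<Rightarrow> complex) \<Rightarrow> (nat \<Rightarrow> complex)) \<Rightarrow> bool" where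
  "weight_normalized t D \<longleftrightarrow> nil_valid t \<and> model_linear t D \<and>
      (\<forall>i\<in>model_index t. weight_triangular t D 1 i)"

lemma weight_normalized_below:
  assumes "weight_normalized t D" "i \<in> model_index t" "k \<in> model_index t"
    and "weight t k \<le> weight t i" "k \<noteq> i"
  shows "D (unit_vec i) k = 0"
  using assms by (auto simp: weight_normalized_def weight_triangular_def)

lemma weight_normalized_diag:
  assumes "weight_normalized t D" "i \<in> model_index t"
  shows "D (unit_vec i) i = of_nat (weight t i)"
  using assms by (auto simp: weight_normalized_def weight_triangular_def)

lemma exists_min_weight:
  assumes "k \<in> model_index t" "P k"
  obtains k0 where "k0 \<in> model_index t" "P k0"
    "\<And>k. k \<in> model_index t \<Longrightarrow> P k \<Longrightarrow> weight t k0 \<le> weight t k"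
  using ex_has_least_nat[of "\<lambda>k. k \<in> model_index t \<and> P k" k "weight t"] assms by blast

text \<open>At a nonzero coordinate of least weight, a weight-triangular map acts by that weight.\<close>

lemma weight_eigvec_eq_zero:
  assumes g: "weight_normalized t D" and h: "h \<in> model_carrier t"
    and eig: "D h = (\<lambda>k. of_nat s * h k)" and z: "\<forall>k\<in>model_index t. weight t k = s \<longrightarrow> h k = 0"
  shows "h = (\<lambda>k. 0)"
proof (rule ccontr)
  assume "h \<noteq> (\<lambda>k. 0)"
  then obtain k1 where "k1 \<in> model_index t" "h k1 \<noteq> 0" using model_carrier_outside[OF h] by auto
  then obtain k0 where k0: "k0 \<in> model_index t" "h k0 \<noteq> 0"
    and least: "\<And>k. k \<in> model_index t \<Longrightarrow> h k \<noteq> 0 \<Longrightarrow> weight t k0 \<le> weight t k"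
    by (rule exists_min_weight) blast
  have l: "model_linear t D" using g by (simp add: weight_normalized_def)
  have "D h k0 = (\<Sum>i\<in>model_index t. h i * D (unit_vec i) k0)"
    using model_linear_expansion[OF l h] by metis
  also have "\<dots> = (\<Sum>i\<in>model_index t. (of_nat (weight t k0) * h k0) * unit_vec k0 i)"
  proof (rule sum.cong[OF refl])
    fix i assume i: "i \<in> model_index t"
    show "h i * D (unit_vec i) k0 = (of_nat (weight t k0) * h k0) * unit_vec k0 i"
      using weight_normalized_diag[OF g k0(1)] weight_normalized_below[OF g i k0(1)] least[OF i]
      by (cases "i = k0"; cases "h i = 0") (auto simp: unit_vec_def)
  qed
  also have "\<dots> = of_nat (weight t k0) * h k0"
    by (subst mult.commute, subst sum_mult_delta[where p = k0 and c = 1]) (auto simp: unit_vec_def k0)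
  finally have "of_nat s * h k0 = of_nat (weight t k0) * h k0" using eig by metis
  then have "weight t k0 = s" using k0(2) by simp
  then show False using z k0 by auto
qed

lemma weight_eigvec_unique:
  assumes g: "weight_normalized t D"
    and G: "G \<in> model_carrier t" "D G = (\<lambda>k. of_nat s * G k)"
    and H: "H \<in> model_carrier t" "D H = (\<lambda>k. of_nat s * H k)"
    and agree: "\<forall>k\<in>model_index t. weight t k = s \<longrightarrow> G k = H k"
  shows "G = H"
proof -
  have l: "model_linear t D" using g by (simp add: weight_normalized_def)
  have "(\<lambda>k. G k - H k) = (\<lambda>k. 0)"
    by (rule weight_eigvec_eq_zero[OF g model_carrier_diff[OF G(1) H(1)]])
       (use agree in \<open>simp_all add: model_linear_diff[OF l G(1) H(1)] G(2) H(2) algebra_simps\<close>)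
  then show ?thesis by (simp add: fun_eq_iff)
qed

definition weight_eigvec_upto ::
    "nil_type \<Rightarrow> ((nat \<Rightarrow> complex) \<Rightarrow> (nat \<Rightarrow> complex)) \<Rightarrow> nat \<Rightarrow> nat \<Rightarrow> (nat \<Rightarrow> complex) \<Rightarrow> bool" where
  "weight_eigvec_upto t D i T f \<longleftrightarrow> f \<in> model_carrier t \<and> f i = 1 \<and>
     (\<forall>k\<in>model_index t. weight t k \<le> weight t i \<and> k \<noteq> i \<longrightarrow> f k = 0) \<and>
     (\<forall>k\<in>model_index t. weight t k \<le> T \<longrightarrow> D f k = of_nat (weight t i) * f k)"

lemma weight_eigvec_upto_start:
  "weight_normalized t D \<Longrightarrow> i \<in> model_index t \<Longrightarrow> weight_eigvec_upto t D i (weight t i) (unit_vec i)"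
  using unit_vec_carrier weight_normalized_below weight_normalized_diag
  by (auto simp: weight_eigvec_upto_def unit_vec_def)

text \<open>Subtracting a multiple of \<open>e\<^sub>k\<^sub>0\<close> corrects the coordinate \<open>k\<^sub>0\<close> of
  \<open>D f - w\<^sub>i f\<close>, since \<open>D e\<^sub>k\<^sub>0\<close> is \<open>w\<^sub>k\<^sub>0 e\<^sub>k\<^sub>0\<close> up to higher weights
  and \<open>w\<^sub>k\<^sub>0 \<noteq> w\<^sub>i\<close>.\<close>

lemma weight_eigvec_upto_correct:
  assumes g: "weight_normalized t D" and f: "weight_eigvec_upto t D i T f" and iT: "weight t i \<le> T"
    and k0: "k0 \<in> model_index t" "weight t k0 = Suc T"
  shows "\<exists>f'. weight_eigvec_upto t D i (Suc T) f'"
proof -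
  have v: "nil_valid t" and l: "model_linear t D" using g by (auto simp: weight_normalized_def)
  have fc: "f \<in> model_carrier t" using f by (simp add: weight_eigvec_upto_def)
  have "weight t k0 \<noteq> weight t i" using k0 iT by simp
  then have ne: "(of_nat (weight t k0) :: complex) - of_nat (weight t i) \<noteq> 0"
    by (metis eq_iff_diff_eq_0 of_nat_eq_iff)
  define c where "c =
      (D f k0 - of_nat (weight t i) * f k0) / (of_nat (weight t k0) - of_nat (weight t i))"
  define f' where "f' = (\<lambda>k. f k - (\<lambda>k. c * unit_vec k0 k) k)"
  have Df': "D f' = (\<lambda>k. D f k - c * D (unit_vec k0) k)"
    unfolding f'_def
    using model_linear_diff[OF l fc model_carrier_scale[OF unit_vec_carrier[OF k0(1)]]]
      model_linear_scale[OF l unit_vec_carrier[OF k0(1)]]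
    by simp
  have "D f' k = of_nat (weight t i) * f' k" if k: "k \<in> model_index t" "weight t k \<le> Suc T" for k
  proof (cases "k = k0")
    case True
    have "c * (of_nat (weight t k0) - of_nat (weight t i)) = D f k0 - of_nat (weight t i) * f k0"
      using ne unfolding c_def by simp
    then show ?thesis using Df' weight_normalized_diag[OF g k0(1)] unfolding True
      by (simp add: f'_def unit_vec_def algebra_simps)
  next
    case False
    then have "weight t k \<le> T" using k k0 weight_eq_imp_eq[OF v k(1) k0(1)] by (metis le_Suc_eq)
    moreover have "D (unit_vec k0) k = 0"
      using weight_normalized_below[OF g k0(1) k(1)] k k0 False by simp
    ultimately show ?thesis using f k Df' False by (simp add: weight_eigvec_upto_def f'_def unit_vec_def)
  qed
  moreover have "f' \<in> model_carrier t"
    unfolding f'_def by (intro model_carrier_diff fc model_carrier_scale unit_vec_carrier k0)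
  ultimately have "weight_eigvec_upto t D i (Suc T) f'"
    using f k0 iT by (auto simp: weight_eigvec_upto_def f'_def unit_vec_def)
  then show ?thesis by blast
qed

lemma weight_eigenvector_exists:
  assumes g: "weight_normalized t D" and i: "i \<in> model_index t"
  shows "\<exists>f. f \<in> model_carrier t \<and> f i = 1 \<and>
    (\<forall>k\<in>model_index t. weight t k \<le> weight t i \<and> k \<noteq> i \<longrightarrow> f k = 0) \<and>
    D f = (\<lambda>k. of_nat (weight t i) * f k)"
proof -
  have l: "model_linear t D" using g by (simp add: weight_normalized_def)
  have "\<exists>f. weight_eigvec_upto t D i (weight t i + d) f" for d
  proof (induction d)
    case 0 then show ?case using weight_eigvec_upto_start[OF g i] by auto
  next
    case (Suc d)
    then obtain f where f: "weight_eigvec_upto t D i (weight t i + d) f" by blast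
    show ?case
    proof (cases "\<exists>k0\<in>model_index t. weight t k0 = Suc (weight t i + d)")
      case True
      then show ?thesis using weight_eigvec_upto_correct[OF g f] by auto
    next
      case False
      then have "weight_eigvec_upto t D i (weight t i + Suc d) f"
        using f by (auto simp: weight_eigvec_upto_def le_Suc_eq)
      then show ?thesis by blast
    qed
  qed
  moreover obtain B where B: "\<forall>k\<in>model_index t. weight t k \<le> B" using weight_bounded by blast
  ultimately obtain f where f: "weight_eigvec_upto t D i (weight t i + B) f" by blast
  then have fc: "f \<in> model_carrier t" by (simp add: weight_eigvec_upto_def)
  have "D f = (\<lambda>k. of_nat (weight t i) * f k)"
    by (rule model_carrier_eqI[OF model_linear_carrier[OF l fc] model_carrier_scale[OF fc]])
       (use f B in \<open>force simp: weight_eigvec_upto_def\<close>)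
  then show ?thesis using f by (auto simp: weight_eigvec_upto_def)
qed

definition weight_eigenbasis ::
    "nil_type \<Rightarrow> ((nat \<Rightarrow> complex) \<Rightarrow> (nat \<Rightarrow> complex)) \<Rightarrow> (nat \<Rightarrow> nat \<Rightarrow> complex) \<Rightarrow> bool" where
  "weight_eigenbasis t D F \<longleftrightarrow> (\<forall>i\<in>model_index t. F i \<in> model_carrier t \<and> F i i = 1 \<and>
      (\<forall>k\<in>model_index t. weight t k \<le> weight t i \<and> k \<noteq> i \<longrightarrow> F i k = 0) \<and>
      D (F i) = (\<lambda>k. of_nat (weight t i) * F i k))"

lemma weight_eigenbasis_exists: "weight_normalized t D \<Longrightarrow> \<exists>F. weight_eigenbasis t D F"
  using weight_eigenvector_exists[of t D] unfolding weight_eigenbasis_def by metis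

context
  fixes t D F
  assumes F: "weight_eigenbasis t D F"
begin

lemma weight_eigenbasis_carrier: "i \<in> model_index t \<Longrightarrow> F i \<in> model_carrier t"
  using F by (simp add: weight_eigenbasis_def)

lemma weight_eigenbasis_diag: "i \<in> model_index t \<Longrightarrow> F i i = 1"
  using F by (simp add: weight_eigenbasis_def)

lemma weight_eigenbasis_below:
  "i \<in> model_index t \<Longrightarrow> k \<in> model_index t \<Longrightarrow> weight t k \<le> weight t i \<Longrightarrow> k \<noteq> i \<Longrightarrow> F i k = 0"
  using F by (simp add: weight_eigenbasis_def)

lemma weight_eigenbasis_eigen: "i \<in> model_index t \<Longrightarrow> D (F i) = (\<lambda>k. of_nat (weight t i) * F i k)"
  using F by (simp add: weight_eigenbasis_def)

lemma weight_eigenbasis_nonzero: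
  "i \<in> model_index t \<Longrightarrow> a \<in> model_index t \<Longrightarrow> F i a \<noteq> 0 \<Longrightarrow> a = i \<or> weight t a > weight t i"
  using weight_eigenbasis_below[of i a] by force

lemma weight_eigenbasis_independent:
  assumes z: "(\<lambda>k. \<Sum>i\<in>model_index t. c i * F i k) = (\<lambda>k. 0)"
  shows "\<forall>i\<in>model_index t. c i = 0"
proof (rule ccontr)
  assume "\<not> (\<forall>i\<in>model_index t. c i = 0)"
  then obtain i1 where "i1 \<in> model_index t" "c i1 \<noteq> 0" by blast
  then obtain i0 where i0: "i0 \<in> model_index t" "c i0 \<noteq> 0"
    and least: "\<And>i. i \<in> model_index t \<Longrightarrow> c i \<noteq> 0 \<Longrightarrow> weight t i0 \<le> weight t i"
    by (rule exists_min_weight) blast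
  have "0 = (\<Sum>i\<in>model_index t. c i * F i i0)" using z by metis
  also have "\<dots> = (\<Sum>i\<in>model_index t. c i0 * unit_vec i0 i)"
  proof (rule sum.cong[OF refl])
    fix i assume i: "i \<in> model_index t"
    show "c i * F i i0 = c i0 * unit_vec i0 i"
      using weight_eigenbasis_diag[OF i0(1)] weight_eigenbasis_below[OF i i0(1)] least[OF i]
      by (cases "i = i0"; cases "c i = 0") (auto simp: unit_vec_def)
  qed
  also have "\<dots> = c i0" by (subst sum_mult_delta[where p = i0 and c = 1]) (auto simp: unit_vec_def i0)
  finally show False using i0 by simp
qed

lemma weight_eigenbasis_span_upto:
  assumes v: "nil_valid t" and u: "u \<in> model_carrier t"
  shows "\<exists>c. \<forall>k\<in>model_index t. weight t k \<le> T \<longrightarrow> u k = (\<Sum>i\<in>model_index t. c i * F i k)"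
proof (induction T)
  case 0
  then show ?case using weight_pos[OF v] by (metis not_one_le_zero le_zero_eq)
next
  case (Suc T)
  then obtain c where c: "\<forall>k\<in>model_index t. weight t k \<le> T \<longrightarrow> u k = (\<Sum>i\<in>model_index t. c i * F i k)"
    by blast
  show ?case
  proof (cases "\<exists>k0\<in>model_index t. weight t k0 = Suc T")
    case False
    then show ?thesis using c by (metis le_Suc_eq)
  next
    case True
    then obtain k0 where k0: "k0 \<in> model_index t" "weight t k0 = Suc T" by blast
    define e where "e = u k0 - (\<Sum>i\<in>model_index t. c i * F i k0)"
    have upd: "(\<Sum>i\<in>model_index t. (c i + e * unit_vec k0 i) * F i k) =
        (\<Sum>i\<in>model_index t. c i * F i k) + e * F k0 k" for k
    proof -
      have "(\<Sum>i\<in>model_index t. (c i + e * unit_vec k0 i) * F i k) =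
          (\<Sum>i\<in>model_index t. c i * F i k) + (\<Sum>i\<in>model_index t. (e * F i k) * unit_vec k0 i)"
        by (simp add: algebra_simps sum.distrib)
      also have "(\<Sum>i\<in>model_index t. (e * F i k) * unit_vec k0 i) = e * F k0 k"
        by (subst sum_mult_delta[where p = k0 and c = 1]) (auto simp: unit_vec_def k0)
      finally show ?thesis .
    qed
    have "u k = (\<Sum>i\<in>model_index t. (c i + e * unit_vec k0 i) * F i k)"
      if k: "k \<in> model_index t" "weight t k \<le> Suc T" for k
    proof (cases "k = k0")
      case True then show ?thesis using upd weight_eigenbasis_diag[OF k0(1)] by (simp add: e_def)
    next
      case False
      then have "weight t k \<le> T" using k k0 weight_eq_imp_eq[OF v k(1) k0(1)] by (metis le_Suc_eq)
      moreover have "F k0 k = 0" using weight_eigenbasis_below[OF k0(1) k(1)] k k0 False by simp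
      ultimately show ?thesis using upd c k by simp
    qed
    then show ?thesis by (intro exI[of _ "\<lambda>i. c i + e * unit_vec k0 i"]) blast
  qed
qed

lemma weight_eigenbasis_spans:
  assumes v: "nil_valid t" and u: "u \<in> model_carrier t"
  shows "\<exists>c. u = (\<lambda>k. \<Sum>i\<in>model_index t. c i * F i k)"
proof -
  obtain B where B: "\<forall>k\<in>model_index t. weight t k \<le> B" using weight_bounded by blast
  obtain c where c: "\<forall>k\<in>model_index t. weight t k \<le> B \<longrightarrow> u k = (\<Sum>i\<in>model_index t. c i * F i k)"
    using weight_eigenbasis_span_upto[OF v u] by blast
  have "u = (\<lambda>k. \<Sum>i\<in>model_index t. c i * F i k)"
    by (rule model_carrier_eqI[OF u model_carrier_sum]) (use c B weight_eigenbasis_carrier in auto)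
  then show ?thesis by blast
qed

lemma weight_eigenbasis_sum_coeff:
  assumes v: "nil_valid t" and ijk: "i \<in> model_index t" "j \<in> model_index t" "k \<in> model_index t"
    and wk: "weight t k = weight t i + weight t j"
  shows "(\<Sum>l\<in>model_index t. model_sc t i j l * F l k) = model_sc t i j k"
proof -
  have "(\<Sum>l\<in>model_index t. model_sc t i j l * F l k) =
      (\<Sum>l\<in>model_index t. model_sc t i j k * unit_vec k l)"
  proof (rule sum.cong[OF refl])
    fix l assume l: "l \<in> model_index t"
    show "model_sc t i j l * F l k = model_sc t i j k * unit_vec k l"
    proof (cases "l \<noteq> k \<and> model_sc t i j l \<noteq> 0")
      case True
      then have "F l k = 0"
        using weight_eigenbasis_nonzero[OF l ijk(3)] model_sc_weight[OF v ijk(1,2) l] wk by force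
      then show ?thesis using True by (simp add: unit_vec_def)
    qed (use weight_eigenbasis_diag[OF l] in \<open>auto simp: unit_vec_def\<close>)
  qed
  also have "\<dots> = model_sc t i j k"
    by (subst sum_mult_delta[where p = k and c = 1]) (auto simp: unit_vec_def ijk)
  finally show ?thesis .
qed

lemma weight_eigenbasis_sum_single:
  assumes v: "nil_valid t" and pqi: "p \<in> model_index t" "q \<in> model_index t" "i \<in> model_index t"
    and sc: "model_sc t p q i \<noteq> 0"
  shows "(\<lambda>k. \<Sum>l\<in>model_index t. model_sc t p q l * F l k) = (\<lambda>k. model_sc t p q i * F i k)"
proof
  fix k
  have "(\<Sum>l\<in>model_index t. model_sc t p q l * F l k) = (\<Sum>l\<in>model_index t. F l k * model_sc t p q l)"
    by (simp add: mult_ac)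
  also have "\<dots> = F i k * model_sc t p q i"
  proof -
    have "model_sc t p q l = (if l = i then model_sc t p q i else 0)" if "l \<in> model_index t" for l
      using model_sc_target_unique[OF v pqi that sc] by (cases "l = i") auto
    from sum_mult_delta[OF finite_model_index this, where f = "\<lambda>l. F l k"] show ?thesis
      using pqi(3) by simp
  qed
  finally show "(\<Sum>l\<in>model_index t. model_sc t p q l * F l k) = model_sc t p q i * F i k"
    by (simp add: mult_ac)
qed

lemma weight_eigenbasis_br_coeff:
  assumes v: "nil_valid t" and ijk: "i \<in> model_index t" "j \<in> model_index t" "k \<in> model_index t"
    and wk: "weight t k = weight t i + weight t j"
  shows "model_br t (F i) (F j) k = model_sc t i j k"
proof -
  have "model_br t (F i) (F j) k =
      (\<Sum>a\<in>model_index t. \<Sum>b\<in>model_index t. F i a * F j b * model_sc t a b k)"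
    using ijk by (simp add: model_br_def model_index_def)
  also have "\<dots> = (\<Sum>a\<in>model_index t. \<Sum>b\<in>model_index t.
      if b = j then (if a = i then model_sc t i j k else 0) else 0)"
  proof (intro sum.cong refl)
    fix a b assume a: "a \<in> model_index t" and b: "b \<in> model_index t"
    show "F i a * F j b * model_sc t a b k = (if b = j then (if a =
        i then model_sc t i j k else 0) else 0)"
    proof (cases "F i a = 0 \<or> F j b = 0 \<or> model_sc t a b k = 0")
      case False
      then have "weight t k = weight t a + weight t b" using model_sc_weight[OF v a b ijk(3)] by simp
      moreover have "a = i \<or> weight t a > weight t i"
        using weight_eigenbasis_nonzero[OF ijk(1) a] False by simp
      moreover have "b = j \<or> weight t b > weight t j"
        using weight_eigenbasis_nonzero[OF ijk(2) b] False by simp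
      ultimately have "a = i \<and> b = j" using wk by auto
      then show ?thesis using weight_eigenbasis_diag ijk by simp
    qed (use weight_eigenbasis_diag ijk in auto)
  qed
  also have "\<dots> = model_sc t i j k" using ijk by simp
  finally show ?thesis .
qed

text \<open>Both sides are eigenvectors of weight \<open>w\<^sub>i + w\<^sub>j\<close> with the same coordinates of that
  weight.\<close>

lemma weight_eigenbasis_br:
  assumes g: "weight_normalized t D" and d: "model_derivation t D"
    and ij: "i \<in> model_index t" "j \<in> model_index t"
  shows "model_br t (F i) (F j) = (\<lambda>k. \<Sum>l\<in>model_index t. model_sc t i j l * F l k)"
proof (rule weight_eigvec_unique[OF g, where s = "weight t i + weight t j"])
  have v: "nil_valid t" and l: "model_linear t D" using g by (auto simp: weight_normalized_def)
  note Fc = weight_eigenbasis_carrier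
  show "model_br t (F i) (F j) \<in> model_carrier t" by (rule model_br_carrier)
  show "(\<lambda>k. \<Sum>l\<in>model_index t. model_sc t i j l * F l k) \<in> model_carrier t"
    by (rule model_carrier_sum) (rule Fc)
  show "D (model_br t (F i) (F j)) = (\<lambda>k. of_nat (weight t i + weight t j) * model_br t (F i) (F j) k)"
    unfolding model_derivation_br[OF d Fc[OF ij(1)] Fc[OF ij(2)]] weight_eigenbasis_eigen[OF ij(1)]
      weight_eigenbasis_eigen[OF ij(2)] model_br_scale_left model_br_scale_right
    by (simp add: algebra_simps)
  have "D (\<lambda>k. \<Sum>l\<in>model_index t. model_sc t i j l * F l k) =
      (\<lambda>k. \<Sum>l\<in>model_index t. model_sc t i j l * D (F l) k)"
    by (rule model_linear_sum[OF l]) (use Fc in auto)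
  also have "\<dots> = (\<lambda>k. of_nat (weight t i + weight t j) * (\<Sum>l\<in>model_index t. model_sc t i j l * F l k))"
    unfolding sum_distrib_left
  proof (intro ext sum.cong refl)
    fix k l assume l: "l \<in> model_index t"
    show "model_sc t i j l * D (F l) k = of_nat (weight t i + weight t j) * (model_sc t i j l * F l k)"
      using model_sc_weight[OF v ij l] weight_eigenbasis_eigen[OF l]
      by (cases "model_sc t i j l = 0") auto
  qed
  finally show "D (\<lambda>k. \<Sum>l\<in>model_index t. model_sc t i j l * F l k) =
      (\<lambda>k. of_nat (weight t i + weight t j) * (\<Sum>l\<in>model_index t. model_sc t i j l * F l k))" .
  show "\<forall>k\<in>model_index t. weight t k = weight t i + weight t j \<longrightarrow>
      model_br t (F i) (F j) k = (\<Sum>l\<in>model_index t. model_sc t i j l * F l k)"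
    using weight_eigenbasis_br_coeff[OF v ij] weight_eigenbasis_sum_coeff[OF v ij] by simp
qed

end

section \<open>Derivations opposite to the weight derivation\<close>

definition acts_nontrivially :: "nil_type \<Rightarrow> nat \<Rightarrow> bool" where
  "acts_nontrivially t i \<longleftrightarrow> (\<exists>h\<in>model_index t. \<exists>r\<in>model_index t. model_sc t i h r \<noteq> 0)"

lemma acts_nontriviallyI:
  "h \<in> model_index t \<Longrightarrow> r \<in> model_index t \<Longrightarrow> model_sc t i h r \<noteq> 0 \<Longrightarrow> acts_nontrivially t i"
  unfolding acts_nontrivially_def by blast

lemma acts_nontrivially_low:
  assumes v: "nil_valid t" and i: "1 \<le> i" "i \<le> model_dim t - 2"
  shows "acts_nontrivially t i"
proof -
  have m: "model_dim t \<ge> 7" using v by (cases t) auto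
  note U = model_index_def model_sc_def up_g3_def up_g17_def up_g29_def up_g311_def
  consider "i = 1" | "i = 2" | "3 \<le> i" using i by linarith
  then show ?thesis
  proof cases
    case 1
    show ?thesis by (rule acts_nontriviallyI[of 2 t 3]) (use m 1 v in \<open>cases t; auto simp: U\<close>)+
  next
    case 2
    show ?thesis by (rule acts_nontriviallyI[of 1 t 3]) (use m 2 v in \<open>cases t; auto simp: U\<close>)+
  next
    case 3
    show ?thesis by (rule acts_nontriviallyI[of 1 t "i+1"]) (use m 3 i v in \<open>cases t; auto simp: U\<close>)+
  qed
qed

lemma acts_nontrivially_or_br:
  assumes v: "nil_valid t" and i: "i \<in> model_index t"
  shows "acts_nontrivially t i \<or> (\<exists>p\<in>model_index t. \<exists>q\<in>model_index t.
    acts_nontrivially t p \<and> acts_nontrivially t q \<and> model_sc t p q i \<noteq> 0)"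
proof -
  define m where "m = model_dim t"
  have m: "m \<ge> 7" using v by (cases t) (auto simp: m_def)
  have i': "1 \<le> i" "i \<le> m" using i by (auto simp: model_index_def m_def)
  have low: "acts_nontrivially t 1" "acts_nontrivially t 2" "acts_nontrivially t (m - 2)"
    using acts_nontrivially_low[OF v] m by (auto simp: m_def)
  have idx: "1 \<in> model_index t" "2 \<in> model_index t" "m - 2 \<in> model_index t"
    using m by (auto simp: model_index_def m_def)
  consider "i \<le> m - 2" | "i = m - 1" | "i = m" using i' by linarith
  then show ?thesis
  proof cases
    case 1 then show ?thesis using acts_nontrivially_low[OF v] i' m_def by auto
  next
    case 2
    have "model_sc t 1 (m - 2) i \<noteq> 0"
      using v m 2
      by (cases t) (auto simp: m_def model_sc_def up_g3_def up_g17_def up_g29_def up_g311_def)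
    then show ?thesis using low idx by blast
  next
    case 3
    show ?thesis
    proof (cases "\<exists>n. t = G3 n")
      case True
      then obtain n where n: "t = G3 n" by blast
      have "acts_nontrivially t n"
        by (rule acts_nontriviallyI[of 2 t 4])
           (use m v n in \<open>auto simp: model_index_def m_def model_sc_def up_g3_def\<close>)
      then show ?thesis using 3 n m_def by simp
    next
      case False
      then have "model_sc t 2 (m - 2) i \<noteq> 0"
        using 3 by (cases t) (auto simp: m_def model_sc_def up_g17_def up_g29_def up_g311_def)
      then show ?thesis using low idx by blast
    qed
  qed
qed

context
  fixes t D F L
  assumes g: "weight_normalized t D" and d: "model_derivation t D" and F: "weight_eigenbasis t D F"
    and Ld: "model_derivation t L"
    and annihil: "\<forall>u\<in>model_carrier t. \<forall>w\<in>model_carrier t. model_br t w (\<lambda>k. D u k + L u k) = (\<lambda>k. 0)"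
    and comm: "\<forall>u\<in>model_carrier t. L (D u) = D (L u)"
begin

lemma derivation_add_on_eigenbasis:
  assumes i: "i \<in> model_index t"
  shows "(\<lambda>k. D (F i) k + L (F i) k) = (\<lambda>k. (D (F i) i + L (F i) i) * F i k)"
proof (rule weight_eigvec_unique[OF g, where s = "weight t i"])
  have v: "nil_valid t" and l: "model_linear t D" using g by (auto simp: weight_normalized_def)
  have lL: "model_linear t L" using Ld by (rule model_derivation_linear)
  have Fc: "F i \<in> model_carrier t" by (rule weight_eigenbasis_carrier[OF F i])
  note DFc = model_linear_carrier[OF l Fc] and LFc = model_linear_carrier[OF lL Fc]
  show "(\<lambda>k. D (F i) k + L (F i) k) \<in> model_carrier t" by (rule model_carrier_add[OF DFc LFc])
  show "(\<lambda>k. (D (F i) i + L (F i) i) * F i k) \<in> model_carrier t" by (rule model_carrier_scale[OF Fc])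
  have "D (L (F i)) = L (D (F i))" using comm Fc by simp
  also have "\<dots> = (\<lambda>k. of_nat (weight t i) * L (F i) k)"
    unfolding weight_eigenbasis_eigen[OF F i] by (rule model_linear_scale[OF lL Fc])
  moreover have "D (D (F i)) = (\<lambda>k. of_nat (weight t i) * D (F i) k)"
    using model_linear_scale[OF l Fc, of "of_nat (weight t i)"] weight_eigenbasis_eigen[OF F i] by simp
  ultimately show "D (\<lambda>k. D (F i) k + L (F i) k) = (\<lambda>k. of_nat (weight t i) * (D (F i) k + L (F i) k))"
    unfolding model_linear_add[OF l DFc LFc] by (simp add: algebra_simps)
  show "D (\<lambda>k. (D (F i) i + L (F i) i) * F i k) =
      (\<lambda>k. of_nat (weight t i) * ((D (F i) i + L (F i) i) * F i k))"
    unfolding model_linear_scale[OF l Fc] weight_eigenbasis_eigen[OF F i] by (simp add: algebra_simps)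
  show "\<forall>k\<in>model_index t. weight t k = weight t i \<longrightarrow>
      D (F i) k + L (F i) k = (D (F i) i + L (F i) i) * F i k"
  proof (intro ballI impI)
    fix k assume "k \<in> model_index t" "weight t k = weight t i"
    then have "k = i" by (rule weight_eq_imp_eq[OF v _ i])
    then show "D (F i) k + L (F i) k = (D (F i) i + L (F i) i) * F i k"
      using weight_eigenbasis_diag[OF F i] by simp
  qed
qed

lemma derivation_neg_on_eigenbasis_nontrivial:
  assumes i: "i \<in> model_index t" and nt: "acts_nontrivially t i"
  shows "L (F i) = (\<lambda>k. - of_nat (weight t i) * F i k)"
proof -
  have v: "nil_valid t" using g by (simp add: weight_normalized_def)
  obtain h r where hr: "h \<in> model_index t" "r \<in> model_index t" "model_sc t i h r \<noteq> 0"
    using nt by (auto simp: acts_nontrivially_def)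
  define \<zeta> where "\<zeta> = D (F i) i + L (F i) i"
  have "model_br t (\<lambda>k. \<zeta> * F i k) (F h) = (\<lambda>k. - model_br t (F h) (\<lambda>k. D (F i) k + L (F i) k) k)"
    unfolding \<zeta>_def derivation_add_on_eigenbasis[OF i, symmetric] by (rule model_br_antisym)
  also have "\<dots> = (\<lambda>k. 0)"
    using annihil weight_eigenbasis_carrier[OF F i] weight_eigenbasis_carrier[OF F hr(1)] by simp
  finally have "model_br t (\<lambda>k. \<zeta> * F i k) (F h) r = 0" by simp
  moreover have "model_br t (\<lambda>k. \<zeta> * F i k) (F h) r = \<zeta> * model_sc t i h r"
    using weight_eigenbasis_br_coeff[OF F v i hr(1,2)] model_sc_weight[OF v i hr]
    by (simp add: model_br_scale_left)
  ultimately have "\<zeta> = 0" using hr(3) by simp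
  then have "(\<lambda>k. D (F i) k + L (F i) k) = (\<lambda>k. 0)"
    using derivation_add_on_eigenbasis[OF i] by (simp add: \<zeta>_def)
  then show ?thesis by (simp add: fun_eq_iff add_eq_0_iff weight_eigenbasis_eigen[OF F i])
qed

lemma derivation_neg_on_eigenbasis:
  assumes i: "i \<in> model_index t"
  shows "L (F i) = (\<lambda>k. - of_nat (weight t i) * F i k)"
proof -
  have v: "nil_valid t" using g by (simp add: weight_normalized_def)
  have lL: "model_linear t L" using Ld by (rule model_derivation_linear)
  note Fc = weight_eigenbasis_carrier[OF F] and neg = derivation_neg_on_eigenbasis_nontrivial
  consider "acts_nontrivially t i" | p q where "p \<in> model_index t" "q \<in> model_index t"
    "acts_nontrivially t p" "acts_nontrivially t q" "model_sc t p q i \<noteq> 0"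
    using acts_nontrivially_or_br[OF v i] by blast
  then show ?thesis
  proof cases
    case 1 then show ?thesis by (rule neg[OF i])
  next
    case 2
    define c where "c = model_sc t p q i"
    have br: "model_br t (F p) (F q) = (\<lambda>k. c * F i k)"
      using weight_eigenbasis_br[OF F g d 2(1,2)] weight_eigenbasis_sum_single[OF F v 2(1,2) i 2(5)]
      by (simp add: c_def)
    have "(\<lambda>k. c * L (F i) k) = L (model_br t (F p) (F q))"
      using br model_linear_scale[OF lL Fc[OF i], of c] by simp
    also have "\<dots> = (\<lambda>k. model_br t (L (F p)) (F q) k + model_br t (F p) (L (F q)) k)"
      by (rule model_derivation_br[OF Ld Fc[OF 2(1)] Fc[OF 2(2)]])
    also have "\<dots> = (\<lambda>k. c * (- of_nat (weight t i) * F i k))"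
      unfolding neg[OF 2(1,3)] neg[OF 2(2,4)] model_br_scale_left model_br_scale_right br
      by (simp add: model_sc_weight[OF v 2(1,2) i 2(5)] algebra_simps)
    finally have "\<And>k. c * (L (F i) k + of_nat (weight t i) * F i k) = 0"
      by (simp add: fun_eq_iff algebra_simps)
    then show ?thesis using 2(5) by (simp add: c_def fun_eq_iff add_eq_0_iff)
  qed
qed

lemma derivation_eq_neg:
  assumes u: "u \<in> model_carrier t"
  shows "L u = (\<lambda>k. - D u k)"
proof -
  have v: "nil_valid t" and l: "model_linear t D" using g by (auto simp: weight_normalized_def)
  have lL: "model_linear t L" using Ld by (rule model_derivation_linear)
  obtain c where c: "u = (\<lambda>k. \<Sum>i\<in>model_index t. c i * F i k)"
    using weight_eigenbasis_spans[OF F v u] by blast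
  have "L u = (\<lambda>k. \<Sum>i\<in>model_index t. c i * L (F i) k)"
    unfolding c by (rule model_linear_sum[OF lL]) (use weight_eigenbasis_carrier[OF F] in auto)
  moreover have "D u = (\<lambda>k. \<Sum>i\<in>model_index t. c i * D (F i) k)"
    unfolding c by (rule model_linear_sum[OF l]) (use weight_eigenbasis_carrier[OF F] in auto)
  ultimately show ?thesis
    using derivation_neg_on_eigenbasis weight_eigenbasis_eigen[OF F] by (simp add: sum_negf[symmetric])
qed

end

section \<open>The weight filtration\<close>

definition weight_filtration :: "nil_type \<Rightarrow> nat \<Rightarrow> (nat \<Rightarrow> complex) set" where
  "weight_filtration t s = {v. \<forall>k\<in>model_index t. weight t k < s \<longrightarrow> v k = 0}"

lemma model_br_weight_filtration:
  assumes v: "nil_valid t" and u: "u \<in> weight_filtration t p" and w: "w \<in> weight_filtration t q"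
  shows "model_br t u w \<in> weight_filtration t (p + q)"
  unfolding weight_filtration_def
proof (intro CollectI ballI impI)
  fix k assume k: "k \<in> model_index t" "weight t k < p + q"
  have "model_br t u w k = (\<Sum>i\<in>model_index t. \<Sum>j\<in>model_index t. u i * w j * model_sc t i j k)"
    using k by (simp add: model_br_def model_index_def)
  also have "\<dots> = 0"
  proof (intro sum.neutral ballI)
    fix i j assume i: "i \<in> model_index t" and j: "j \<in> model_index t"
    show "u i * w j * model_sc t i j k = 0"
    proof (cases "model_sc t i j k = 0")
      case False
      then have "weight t k = weight t i + weight t j" using model_sc_weight[OF v i j k(1)] by simp
      then have "weight t i < p \<or> weight t j < q" using k by auto
      then show ?thesis using u w i j by (auto simp: weight_filtration_def)
    qed simp
  qed
  finally show "model_br t u w k = 0" .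
qed

lemma weight_filtration_one:
  assumes v: "nil_valid t"
  shows "u \<in> weight_filtration t (Suc 0)"
  unfolding weight_filtration_def
proof (intro CollectI ballI impI)
  fix k assume k: "k \<in> model_index t" "weight t k < Suc 0"
  have "weight t k \<ge> 1" by (rule weight_pos[OF v k(1)])
  with k show "u k = 0" by simp
qed

lemma weight_nilpotent_raises:
  assumes l: "model_linear t D" and g: "\<forall>i\<in>model_index t. weight_triangular t D 0 i"
    and u: "u \<in> model_carrier t" "u \<in> weight_filtration t s"
  shows "D u \<in> weight_filtration t (Suc s)"
  unfolding weight_filtration_def
proof (intro CollectI ballI impI)
  fix k assume k: "k \<in> model_index t" "weight t k < Suc s"
  have "D u k = (\<Sum>i\<in>model_index t. u i * D (unit_vec i) k)"
    using model_linear_expansion[OF l u(1)] by metis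
  also have "\<dots> = 0"
  proof (intro sum.neutral ballI)
    fix i assume i: "i \<in> model_index t"
    show "u i * D (unit_vec i) k = 0"
    proof (cases "u i = 0")
      case False
      then have "s \<le> weight t i" using u(2) i by (auto simp: weight_filtration_def not_less)
      then have "D (unit_vec i) k = 0" using g i k by (auto simp: weight_triangular_def)
      then show ?thesis by simp
    qed simp
  qed
  finally show "D u k = 0" .
qed

section \<open>An ideal isomorphic to a model algebra\<close>

locale model_iso =
  fixes sc :: "complex \<Rightarrow> 'a::ab_group_add \<Rightarrow> 'a" and br :: "'a \<Rightarrow> 'a \<Rightarrow> 'a"
    and N :: "'a set" and t :: nil_type and \<phi> :: "'a \<Rightarrow> nat \<Rightarrow> complex"
  assumes leibniz_alg: "leibniz_algebra sc br" and N_ideal: "is_ideal sc br N" and valid: "nil_valid t"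
    and \<phi>_bij: "bij_betw \<phi> N (model_carrier t)"
    and \<phi>_add: "u \<in> N \<Longrightarrow> v \<in> N \<Longrightarrow> \<phi> (u + v) = (\<lambda>k. \<phi> u k + \<phi> v k)"
    and \<phi>_scale: "u \<in> N \<Longrightarrow> \<phi> (sc c u) = (\<lambda>k. c * \<phi> u k)"
    and \<phi>_br: "u \<in> N \<Longrightarrow> v \<in> N \<Longrightarrow> \<phi> (br u v) = model_br t (\<phi> u) (\<phi> v)"
begin

sublocale V: vector_space sc using leibniz_alg by (simp add: leibniz_algebra_def)

lemma br_add_left: "br (u + v) w = br u w + br v w"
  using leibniz_alg by (simp add: leibniz_algebra_def bilinear_br_def)

lemma br_add_right: "br u (v + w) = br u v + br u w"
  using leibniz_alg by (simp add: leibniz_algebra_def bilinear_br_def)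

lemma br_scale_left: "br (sc c u) v = sc c (br u v)"
  using leibniz_alg by (simp add: leibniz_algebra_def bilinear_br_def)

lemma br_scale_right: "br u (sc c v) = sc c (br u v)"
  using leibniz_alg by (simp add: leibniz_algebra_def bilinear_br_def)

lemma leibniz: "br u (br v w) = br (br u v) w - br (br u w) v"
  using leibniz_alg by (simp add: leibniz_algebra_def)

lemma br_zero_right: "br u 0 = 0"
  using br_add_right[of u 0 0] by simp

lemma br_minus_right: "br u (- v) = - br u v"
  using br_add_right[of u v "- v"] br_zero_right by (simp add: eq_neg_iff_add_eq_0 add.commute)

lemma br_diff_right: "br u (v - w) = br u v - br u w"
  using br_add_right[of u v "- w"] br_minus_right by simp

lemma br_br_self: "br a (br z z) = 0" using leibniz[of a z z] by simp

lemma N_subspace: "V.subspace N" using N_ideal by (simp add: is_ideal_def)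

lemma N_zero: "0 \<in> N" using N_subspace V.subspace_0 by blast

lemma N_add: "u \<in> N \<Longrightarrow> v \<in> N \<Longrightarrow> u + v \<in> N" using N_subspace V.subspace_add by blast

lemma N_scale: "u \<in> N \<Longrightarrow> sc c u \<in> N" using N_subspace V.subspace_scale by blast

lemma N_neg: "u \<in> N \<Longrightarrow> - u \<in> N" using N_subspace V.subspace_neg by blast

lemma N_br_left: "u \<in> N \<Longrightarrow> br u v \<in> N" using N_ideal by (simp add: is_ideal_def)

lemma N_br_right: "u \<in> N \<Longrightarrow> br v u \<in> N" using N_ideal by (simp add: is_ideal_def)

abbreviation C where "C \<equiv> model_carrier t"

definition \<psi> where "\<psi> = inv_into N \<phi>"

lemma \<phi>_carrier: "u \<in> N \<Longrightarrow> \<phi> u \<in> C" using \<phi>_bij bij_betwE by blast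

lemma \<psi>_in_N: "m \<in> C \<Longrightarrow> \<psi> m \<in> N" using \<phi>_bij unfolding \<psi>_def by (metis bij_betw_def inv_into_into)

lemma \<phi>_\<psi>: "m \<in> C \<Longrightarrow> \<phi> (\<psi> m) = m" using \<phi>_bij unfolding \<psi>_def by (rule bij_betw_inv_into_right)

lemma \<psi>_\<phi>: "u \<in> N \<Longrightarrow> \<psi> (\<phi> u) = u" using \<phi>_bij unfolding \<psi>_def by (rule bij_betw_inv_into_left)

lemma \<phi>_inj: "u \<in> N \<Longrightarrow> v \<in> N \<Longrightarrow> \<phi> u = \<phi> v \<Longrightarrow> u = v" by (metis \<psi>_\<phi>)

lemma \<psi>_inj: "m \<in> C \<Longrightarrow> m' \<in> C \<Longrightarrow> \<psi> m = \<psi> m' \<Longrightarrow> m = m'" by (metis \<phi>_\<psi>)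

lemma \<phi>_zero: "\<phi> 0 = (\<lambda>k. 0)"
proof -
  have "\<phi> (0 + 0) = (\<lambda>k. \<phi> 0 k + \<phi> 0 k)" using \<phi>_add[OF N_zero N_zero] .
  then have "\<And>k. \<phi> 0 k = \<phi> 0 k + \<phi> 0 k" by (metis add_0)
  then show ?thesis by (simp add: fun_eq_iff)
qed

lemma \<psi>_zero: "\<psi> (\<lambda>k. 0) = 0" using \<psi>_\<phi>[OF N_zero] \<phi>_zero by simp

lemma \<phi>_eq_zero: "u \<in> N \<Longrightarrow> \<phi> u = (\<lambda>k. 0) \<Longrightarrow> u = 0" using \<phi>_inj[OF _ N_zero] \<phi>_zero by simp

lemma \<psi>_add: "m \<in> C \<Longrightarrow> m' \<in> C \<Longrightarrow> \<psi> (\<lambda>k. m k + m' k) = \<psi> m + \<psi> m'"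
proof -
  assume m: "m \<in> C" "m' \<in> C"
  have "\<phi> (\<psi> m + \<psi> m') = (\<lambda>k. m k + m' k)"
    using \<phi>_add[OF \<psi>_in_N[OF m(1)] \<psi>_in_N[OF m(2)]] \<phi>_\<psi>[OF m(1)] \<phi>_\<psi>[OF m(2)] by simp
  then show ?thesis using \<psi>_\<phi>[OF N_add[OF \<psi>_in_N[OF m(1)] \<psi>_in_N[OF m(2)]]] by simp
qed

lemma \<psi>_scale: "m \<in> C \<Longrightarrow> \<psi> (\<lambda>k. c * m k) = sc c (\<psi> m)"
proof -
  assume m: "m \<in> C"
  have "\<phi> (sc c (\<psi> m)) = (\<lambda>k. c * m k)" using \<phi>_scale[OF \<psi>_in_N[OF m]] \<phi>_\<psi>[OF m] by simp
  then show ?thesis using \<psi>_\<phi>[OF N_scale[OF \<psi>_in_N[OF m]], of c] by simp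
qed

lemma \<psi>_br: "m \<in> C \<Longrightarrow> m' \<in> C \<Longrightarrow> \<psi> (model_br t m m') = br (\<psi> m) (\<psi> m')"
proof -
  assume m: "m \<in> C" "m' \<in> C"
  have "\<phi> (br (\<psi> m) (\<psi> m')) = model_br t m m'"
    using \<phi>_br[OF \<psi>_in_N[OF m(1)] \<psi>_in_N[OF m(2)]] \<phi>_\<psi>[OF m(1)] \<phi>_\<psi>[OF m(2)] by simp
  then show ?thesis using \<psi>_\<phi>[OF N_br_left[OF \<psi>_in_N[OF m(1)]]] by metis
qed

lemma \<psi>_sum:
  assumes S: "finite S" and f: "\<And>i. i \<in> S \<Longrightarrow> f i \<in> C"
  shows "\<psi> (\<lambda>k. \<Sum>i\<in>S. c i * f i k) = (\<Sum>i\<in>S. sc (c i) (\<psi> (f i)))"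
  using S f
proof (induction S rule: finite_induct)
  case empty then show ?case using \<psi>_zero by simp
next
  case (insert x F)
  have "\<psi> (\<lambda>k. \<Sum>i\<in>insert x F. c i * f i k) = \<psi> (\<lambda>k. (\<lambda>k. c x * f x k) k + (\<lambda>k. \<Sum>i\<in>F. c i * f i k) k)"
    using insert by simp
  also have "\<dots> = \<psi> (\<lambda>k. c x * f x k) + \<psi> (\<lambda>k. \<Sum>i\<in>F. c i * f i k)"
    by (rule \<psi>_add) (use insert in \<open>auto intro!: model_carrier_scale model_carrier_sum\<close>)
  also have "\<dots> = (\<Sum>i\<in>insert x F. sc (c i) (\<psi> (f i)))"
    using insert \<psi>_scale[of "f x" "c x"] by simp
  finally show ?case .
qed

lemma N_br_antisym: "u \<in> N \<Longrightarrow> v \<in> N \<Longrightarrow> br v u = - br u v"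
proof -
  assume u: "u \<in> N" and v: "v \<in> N"
  have "\<phi> (br u v + br v u) = (\<lambda>k. model_br t (\<phi> u) (\<phi> v) k + model_br t (\<phi> v) (\<phi> u) k)"
    using \<phi>_add[OF N_br_left[OF u] N_br_left[OF v]] \<phi>_br[OF u v] \<phi>_br[OF v u] by simp
  also have "\<dots> = (\<lambda>k. 0)" by (subst model_br_antisym) simp
  finally have "br u v + br v u = 0" using \<phi>_eq_zero N_add[OF N_br_left[OF u] N_br_left[OF v]] by blast
  then show ?thesis by (simp add: eq_neg_iff_add_eq_0 add.commute)
qed

definition right_mult where "right_mult z u = \<phi> (br (\<psi> u) z)"

definition left_mult where "left_mult z u = \<phi> (br z (\<psi> u))"

lemma right_mult_derivation: "model_derivation t (right_mult z)"
  unfolding model_derivation_def model_linear_def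
proof (intro conjI ballI allI)
  fix u assume u: "u \<in> C"
  show "right_mult z u \<in> C" unfolding right_mult_def by (rule \<phi>_carrier[OF N_br_left[OF \<psi>_in_N[OF u]]])
next
  fix u v assume u: "u \<in> C" and v: "v \<in> C"
  show "right_mult z (\<lambda>k. u k + v k) = (\<lambda>k. right_mult z u k + right_mult z v k)"
    unfolding right_mult_def \<psi>_add[OF u v] br_add_left
    by (rule \<phi>_add[OF N_br_left[OF \<psi>_in_N[OF u]] N_br_left[OF \<psi>_in_N[OF v]]])
next
  fix c u assume u: "u \<in> C"
  show "right_mult z (\<lambda>k. c * u k) = (\<lambda>k. c * right_mult z u k)"
    unfolding right_mult_def \<psi>_scale[OF u] br_scale_left by (rule \<phi>_scale[OF N_br_left[OF \<psi>_in_N[OF u]]])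
next
  fix u v assume u: "u \<in> C" and v: "v \<in> C"
  have e: "br (br (\<psi> u) (\<psi> v)) z = br (\<psi> u) (br (\<psi> v) z) + br (br (\<psi> u) z) (\<psi> v)"
    using leibniz[of "\<psi> u" "\<psi> v" z] by (simp add: algebra_simps)
  show "right_mult z (model_br t u v) =
      (\<lambda>k. model_br t (right_mult z u) v k + model_br t u (right_mult z v) k)"
    unfolding right_mult_def \<psi>_br[OF u v] e
    using \<phi>_add[OF N_br_left[OF \<psi>_in_N[OF u]] N_br_left[OF N_br_left[OF \<psi>_in_N[OF u]]]]
      \<phi>_br[OF \<psi>_in_N[OF u] N_br_left[OF \<psi>_in_N[OF v]]]
      \<phi>_br[OF N_br_left[OF \<psi>_in_N[OF u]] \<psi>_in_N[OF v]] \<phi>_\<psi>[OF u] \<phi>_\<psi>[OF v]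
    by (simp add: add.commute)
qed

text \<open>Right multiplications are derivations by the Leibniz identity; for left multiplications
  one also needs the antisymmetry of the bracket on \<open>N\<close>.\<close>

lemma left_mult_derivation: "model_derivation t (left_mult z)"
  unfolding model_derivation_def model_linear_def
proof (intro conjI ballI allI)
  fix u assume u: "u \<in> C"
  show "left_mult z u \<in> C" unfolding left_mult_def by (rule \<phi>_carrier[OF N_br_right[OF \<psi>_in_N[OF u]]])
next
  fix u v assume u: "u \<in> C" and v: "v \<in> C"
  show "left_mult z (\<lambda>k. u k + v k) = (\<lambda>k. left_mult z u k + left_mult z v k)"
    unfolding left_mult_def \<psi>_add[OF u v] br_add_right
    by (rule \<phi>_add[OF N_br_right[OF \<psi>_in_N[OF u]] N_br_right[OF \<psi>_in_N[OF v]]])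
next
  fix c u assume u: "u \<in> C"
  show "left_mult z (\<lambda>k. c * u k) = (\<lambda>k. c * left_mult z u k)"
    unfolding left_mult_def \<psi>_scale[OF u] br_scale_right
    by (rule \<phi>_scale[OF N_br_right[OF \<psi>_in_N[OF u]]])
next
  fix u v assume u: "u \<in> C" and v: "v \<in> C"
  have a: "br (br z (\<psi> v)) (\<psi> u) = - br (\<psi> u) (br z (\<psi> v))"
    by (rule N_br_antisym[OF \<psi>_in_N[OF u] N_br_right[OF \<psi>_in_N[OF v]]])
  have e: "br z (br (\<psi> u) (\<psi> v)) = br (br z (\<psi> u)) (\<psi> v) + br (\<psi> u) (br z (\<psi> v))"
    using leibniz[of z "\<psi> u" "\<psi> v"] a by simp
  show "left_mult z (model_br t u v) =
      (\<lambda>k. model_br t (left_mult z u) v k + model_br t u (left_mult z v) k)"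
    unfolding left_mult_def \<psi>_br[OF u v] e
    using \<phi>_add[OF N_br_left[OF N_br_right[OF \<psi>_in_N[OF u]]] N_br_left[OF \<psi>_in_N[OF u]]]
      \<phi>_br[OF N_br_right[OF \<psi>_in_N[OF u]] \<psi>_in_N[OF v]]
      \<phi>_br[OF \<psi>_in_N[OF u] N_br_right[OF \<psi>_in_N[OF v]]] \<phi>_\<psi>[OF u] \<phi>_\<psi>[OF v]
    by simp
qed


lemma \<psi>_image_independent:
  assumes Gc: "\<forall>i\<in>model_index t. G i \<in> C"
    and Gi: "\<forall>c. (\<lambda>k. \<Sum>i\<in>model_index t. c i * G i k) = (\<lambda>k. 0) \<longrightarrow> (\<forall>i\<in>model_index t. c i = 0)"
  shows "V.independent ((\<lambda>i. \<psi> (G i)) ` model_index t)"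
proof
  define e where "e = (\<lambda>i. \<psi> (G i))"
  have einj: "inj_on e (model_index t)"
    unfolding e_def
    by (rule inj_onI) (use inj_on_if_coords_independent[OF Gi] Gc \<psi>_inj in \<open>metis inj_onD\<close>)
  assume "V.dependent ((\<lambda>i. \<psi> (G i)) ` model_index t)"
  then obtain u where u: "\<exists>v\<in>e ` model_index t. u v \<noteq> 0" "(\<Sum>v\<in>e ` model_index t. sc (u v) v) = 0"
    using V.dependent_finite[of "e ` model_index t"] by (auto simp: e_def)
  have "(\<Sum>v\<in>e ` model_index t. sc (u v) v) = (\<Sum>i\<in>model_index t. sc (u (e i)) (e i))"
    by (rule sum.reindex[OF einj, unfolded comp_def])
  also have "\<dots> = \<psi> (\<lambda>k. \<Sum>i\<in>model_index t. u (e i) * G i k)"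
    unfolding e_def by (rule \<psi>_sum[symmetric]) (use Gc in auto)
  finally have "\<psi> (\<lambda>k. \<Sum>i\<in>model_index t. u (e i) * G i k) = \<psi> (\<lambda>k. 0)" using u(2) \<psi>_zero by simp
  then have "(\<lambda>k. \<Sum>i\<in>model_index t. u (e i) * G i k) = (\<lambda>k. 0)"
    by (rule \<psi>_inj[rotated 2]) (use Gc in \<open>auto intro!: model_carrier_sum model_carrier_zero\<close>)
  then have "\<forall>i\<in>model_index t. u (e i) = 0" using spec[OF Gi, of "\<lambda>i. u (e i)"] by simp
  then show False using u(1) by auto
qed

lemma \<psi>_image_span:
  assumes Gc: "\<forall>i\<in>model_index t. G i \<in> C"
    and Gs: "\<forall>u\<in>C. \<exists>c. u = (\<lambda>k. \<Sum>i\<in>model_index t. c i * G i k)"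
  shows "V.span ((\<lambda>i. \<psi> (G i)) ` model_index t) = N"
proof
  show "V.span ((\<lambda>i. \<psi> (G i)) ` model_index t) \<subseteq> N"
    by (rule V.span_minimal[OF _ N_subspace]) (use Gc \<psi>_in_N in auto)
next
  show "N \<subseteq> V.span ((\<lambda>i. \<psi> (G i)) ` model_index t)"
  proof
    fix v assume v: "v \<in> N"
    obtain c where c: "\<phi> v = (\<lambda>k. \<Sum>i\<in>model_index t. c i * G i k)" using Gs \<phi>_carrier[OF v] by blast
    have "v = \<psi> (\<phi> v)" using \<psi>_\<phi>[OF v] by simp
    also have "\<dots> = (\<Sum>i\<in>model_index t. sc (c i) (\<psi> (G i)))" unfolding c by (rule \<psi>_sum) (use Gc in auto)
    also have "\<dots> \<in> V.span ((\<lambda>i. \<psi> (G i)) ` model_index t)"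
      by (intro V.span_sum V.span_scale V.span_base) auto
    finally show "v \<in> V.span ((\<lambda>i. \<psi> (G i)) ` model_index t)" .
  qed
qed

lemma \<psi>_basis:
  assumes Gc: "\<forall>i\<in>model_index t. G i \<in> C"
    and Gi: "\<forall>c. (\<lambda>k. \<Sum>i\<in>model_index t. c i * G i k) = (\<lambda>k. 0) \<longrightarrow> (\<forall>i\<in>model_index t. c i = 0)"
    and Gs: "\<forall>u\<in>C. \<exists>c. u = (\<lambda>k. \<Sum>i\<in>model_index t. c i * G i k)"
  shows "inj_on (\<lambda>i. \<psi> (G i)) (model_index t)" "V.independent ((\<lambda>i. \<psi> (G i)) ` model_index t)"
    "V.span ((\<lambda>i. \<psi> (G i)) ` model_index t) = N" "card ((\<lambda>i. \<psi> (G i)) ` model_index t) = model_dim t"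
proof -
  show inj: "inj_on (\<lambda>i. \<psi> (G i)) (model_index t)"
    by (rule inj_onI) (use inj_on_if_coords_independent[OF Gi] Gc \<psi>_inj in \<open>metis inj_onD\<close>)
  show "V.independent ((\<lambda>i. \<psi> (G i)) ` model_index t)" by (rule \<psi>_image_independent[OF Gc Gi])
  show "V.span ((\<lambda>i. \<psi> (G i)) ` model_index t) = N" by (rule \<psi>_image_span[OF Gc Gs])
  show "card ((\<lambda>i. \<psi> (G i)) ` model_index t) = model_dim t"
    using card_image[OF inj] by (simp add: model_index_def)
qed

lemma standard_basis:
  "V.independent ((\<lambda>i. \<psi> (unit_vec i)) ` model_index t)"
  "V.span ((\<lambda>i. \<psi> (unit_vec i)) ` model_index t) = N"
  "card ((\<lambda>i. \<psi> (unit_vec i)) ` model_index t) = model_dim t"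
proof -
  have indep: "\<forall>c. (\<lambda>k. \<Sum>i\<in>model_index t. c i * unit_vec i k) = (\<lambda>k. 0) \<longrightarrow> (\<forall>i\<in>model_index t. c i = 0)"
  proof (intro allI impI ballI)
    fix c i assume z: "(\<lambda>k. \<Sum>i\<in>model_index t. c i * unit_vec i k) = (\<lambda>k. 0)" and i: "i \<in> model_index t"
    have "(\<Sum>l\<in>model_index t. c l * unit_vec l i) = c i"
      by (subst sum_mult_delta[where p = i and c = 1]) (auto simp: unit_vec_def i)
    then show "c i = 0" using z by metis
  qed
  have Gc: "\<forall>i\<in>model_index t. unit_vec i \<in> C" using unit_vec_carrier by blast
  have Gs: "\<forall>u\<in>C. \<exists>c. u = (\<lambda>k. \<Sum>i\<in>model_index t. c i * unit_vec i k)" using unit_vec_expansion by blast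
  show "V.independent ((\<lambda>i. \<psi> (unit_vec i)) ` model_index t)"
    "V.span ((\<lambda>i. \<psi> (unit_vec i)) ` model_index t) = N"
    "card ((\<lambda>i. \<psi> (unit_vec i)) ` model_index t) = model_dim t"
    using \<psi>_basis[OF Gc indep Gs] by simp_all
qed

lemma dim_N: "V.dim N = model_dim t"
  by (rule V.dim_unique[of "(\<lambda>i. \<psi> (unit_vec i)) ` model_index t"])
     (use standard_basis \<psi>_in_N unit_vec_carrier in auto)

section \<open>Nilpotency when the weight scalar vanishes\<close>

definition weight_ideal :: "nat \<Rightarrow> 'a set" where
  "weight_ideal s = {u \<in> N. \<phi> u \<in> weight_filtration t s}"

lemma weight_ideal_subspace: "V.subspace (weight_ideal s)"
proof (rule V.subspaceI)
  show "0 \<in> weight_ideal s" using N_zero \<phi>_zero by (simp add: weight_ideal_def weight_filtration_def)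
next
  fix u v assume "u \<in> weight_ideal s" "v \<in> weight_ideal s"
  then show "u + v \<in> weight_ideal s"
    using N_add \<phi>_add by (simp add: weight_ideal_def weight_filtration_def)
next
  fix c u assume "u \<in> weight_ideal s"
  then show "sc c u \<in> weight_ideal s"
    using N_scale \<phi>_scale by (simp add: weight_ideal_def weight_filtration_def)
qed

context
  fixes y
  assumes decomp: "\<And>v. \<exists>c n. n \<in> N \<and> v = sc c y + n" and yy: "br y y \<in> N"
begin

lemma br_in_N: "br u v \<in> N"
proof -
  have bry: "br w y \<in> N" for w
  proof -
    obtain c n where cn: "n \<in> N" "w = sc c y + n" using decomp by blast
    show ?thesis unfolding cn(2) br_add_left br_scale_left by (intro N_add N_scale yy N_br_left cn(1))
  qed
  obtain c n where cn: "n \<in> N" "v = sc c y + n" using decomp by blast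
  show ?thesis unfolding cn(2) br_add_right br_scale_right by (intro N_add N_scale bry N_br_right cn(1))
qed

lemma lower_central_weight_ideal:
  assumes g: "\<forall>i\<in>model_index t. weight_triangular t (right_mult y) 0 i"
  shows "lower_central sc br UNIV (Suc k) \<subseteq> weight_ideal (Suc k)"
proof (induction k)
  case 0
  show ?case
    unfolding lower_central.simps(2)[of _ _ _ 0]
    by (rule V.span_minimal[OF _ weight_ideal_subspace])
       (use br_in_N weight_filtration_one[OF valid] in \<open>auto simp: weight_ideal_def\<close>)
next
  case (Suc k)
  have l: "model_linear t (right_mult y)" using right_mult_derivation by (rule model_derivation_linear)
  show ?case
    unfolding lower_central.simps(2)[of _ _ _ "Suc k"]
  proof (rule V.span_minimal[OF _ weight_ideal_subspace], rule subsetI)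
    fix w assume "w \<in> {br u v |u v. u \<in> lower_central sc br UNIV (Suc k) \<and> v \<in> UNIV}"
    then obtain u v where w: "w = br u v" and u: "u \<in> weight_ideal (Suc k)" using Suc by blast
    obtain c n where cn: "n \<in> N" "v = sc c y + n" using decomp by blast
    have uN: "u \<in> N" and uF: "\<phi> u \<in> weight_filtration t (Suc k)" using u by (auto simp: weight_ideal_def)
    have "\<phi> (br u y) = right_mult y (\<phi> u)" by (simp add: right_mult_def \<psi>_\<phi>[OF uN])
    then have s1: "br u y \<in> weight_ideal (Suc (Suc k))"
      using weight_nilpotent_raises[OF l g \<phi>_carrier[OF uN] uF] N_br_left[OF uN]
      by (simp add: weight_ideal_def)
    have "\<phi> (br u n) \<in> weight_filtration t (Suc k + Suc 0)"
      unfolding \<phi>_br[OF uN cn(1)]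
      by (rule model_br_weight_filtration[OF valid uF weight_filtration_one[OF valid]])
    then have s2: "br u n \<in> weight_ideal (Suc (Suc k))"
      using N_br_left[OF uN] by (simp add: weight_ideal_def)
    show "w \<in> weight_ideal (Suc (Suc k))" unfolding w cn(2) br_add_right br_scale_right
      by (rule V.subspace_add[OF weight_ideal_subspace V.subspace_scale[OF weight_ideal_subspace s1] s2])
  qed
qed

lemma right_mult_not_weight_nilpotent:
  assumes NR: "is_nilradical sc br N" and y: "y \<notin> N"
    and g: "\<forall>i\<in>model_index t. weight_triangular t (right_mult y) 0 i"
  shows False
proof -
  obtain B where B: "\<forall>k\<in>model_index t. weight t k \<le> B" using weight_bounded by blast
  have "weight_ideal (Suc B) \<subseteq> {0}"
  proof
    fix u assume u: "u \<in> weight_ideal (Suc B)"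
    then have uN: "u \<in> N" by (simp add: weight_ideal_def)
    have "\<phi> u = (\<lambda>k. 0)"
      by (rule model_carrier_eqI[OF \<phi>_carrier[OF uN] model_carrier_zero])
         (use u B in \<open>auto simp: weight_ideal_def weight_filtration_def\<close>)
    then show "u \<in> {0}" using \<phi>_eq_zero[OF uN] by simp
  qed
  then have "lower_central sc br UNIV (Suc B) = {0}"
    using lower_central_weight_ideal[OF g, of B] V.span_zero
    by (auto simp: lower_central.simps(2)[of _ _ _ B])
  then have "nilpotent_sub sc br UNIV" unfolding nilpotent_sub_def by blast
  moreover have "is_ideal sc br UNIV" by (simp add: is_ideal_def)
  ultimately have "UNIV = N" using NR by (auto simp: is_nilradical_def)
  then show False using y by simp
qed

end

section \<open>The outer basis element\<close>

lemma right_left_mult_annihilated: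
  assumes u: "u \<in> C" and w: "w \<in> C"
  shows "model_br t w (\<lambda>k. right_mult x u k + left_mult x u k) = (\<lambda>k. 0)"
proof -
  define n where "n = \<psi> u"
  have nN: "n \<in> N" using \<psi>_in_N[OF u] by (simp add: n_def)
  have sN: "br n x + br x n \<in> N" using nN N_br_left N_br_right N_add by blast
  have "(\<lambda>k. right_mult x u k + left_mult x u k) = \<phi> (br n x + br x n)"
    unfolding right_mult_def left_mult_def n_def[symmetric]
    by (rule \<phi>_add[symmetric]) (use nN N_br_left N_br_right in auto)
  \<comment> \<open>\<open>[n,x] + [x,n]\<close> is a combination of squares, which the Leibniz identity puts into the
    left annihilator.\<close>
  moreover have "br n x + br x n = br (n + x) (n + x) - br n n - br x x"
    by (simp add: br_add_left br_add_right algebra_simps)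
  then have "br (\<psi> w) (br n x + br x n) = 0" by (simp add: br_diff_right br_br_self)
  ultimately show ?thesis using \<phi>_br[OF \<psi>_in_N[OF w] sN] \<phi>_\<psi>[OF w] \<phi>_zero by simp
qed

lemma right_left_mult_commute:
  assumes xx: "br x x \<in> N" and u: "u \<in> C"
  shows "left_mult x (right_mult x u) = right_mult x (left_mult x u)"
proof -
  define n where "n = \<psi> u"
  have nN: "n \<in> N" using \<psi>_in_N[OF u] by (simp add: n_def)
  have "br (br x x) n = 0" using N_br_antisym[OF nN xx] br_br_self by simp
  then have "br x (br n x) = br (br x n) x" using leibniz[of x n x] by simp
  then show ?thesis
    unfolding right_mult_def left_mult_def n_def[symmetric]
    using \<psi>_\<phi>[OF N_br_left[OF nN]] \<psi>_\<phi>[OF N_br_right[OF nN]] by simp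
qed

context
  fixes x F
  assumes g: "weight_normalized t (right_mult x)" and F: "weight_eigenbasis t (right_mult x) F"
    and xx: "br x x \<in> N"
begin

lemma left_mult_eq_neg_right_mult: "u \<in> C \<Longrightarrow> left_mult x u = (\<lambda>k. - right_mult x u k)"
  using derivation_eq_neg[OF g right_mult_derivation F left_mult_derivation]
    right_left_mult_annihilated right_left_mult_commute[OF xx] by blast

lemma br_self_eq_zero: "br x x = 0"
proof -
  have "left_mult x (\<phi> (br x x)) = \<phi> (br x (br x x))" unfolding left_mult_def using \<psi>_\<phi>[OF xx] by simp
  also have "\<dots> = (\<lambda>k. 0)" unfolding br_br_self \<phi>_zero ..
  finally have "right_mult x (\<phi> (br x x)) = (\<lambda>k. of_nat 0 * \<phi> (br x x) k)"
    using left_mult_eq_neg_right_mult[OF \<phi>_carrier[OF xx]] by (simp add: fun_eq_iff)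
  moreover have "\<forall>k\<in>model_index t. weight t k = 0 \<longrightarrow> \<phi> (br x x) k = 0"
    using weight_pos[OF valid] by (metis not_one_le_zero)
  ultimately have "\<phi> (br x x) = (\<lambda>k. 0)" using weight_eigvec_eq_zero[OF g \<phi>_carrier[OF xx]] by blast
  then show ?thesis using \<phi>_eq_zero[OF xx] by simp
qed

lemma \<psi>_eigenbasis_br:
  assumes i: "i \<in> model_index t" and j: "j \<in> model_index t"
  shows "br (\<psi> (F i)) (\<psi> (F j)) = (\<Sum>k\<in>model_index t. sc (model_sc t i j k) (\<psi> (F k)))"
proof -
  note Fc = weight_eigenbasis_carrier[OF F]
  have "br (\<psi> (F i)) (\<psi> (F j)) = \<psi> (model_br t (F i) (F j))"
    by (rule \<psi>_br[symmetric, OF Fc[OF i] Fc[OF j]])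
  also have "\<dots> = \<psi> (\<lambda>k. \<Sum>l\<in>model_index t. model_sc t i j l * F l k)"
    unfolding weight_eigenbasis_br[OF F g right_mult_derivation i j] ..
  also have "\<dots> = (\<Sum>k\<in>model_index t. sc (model_sc t i j k) (\<psi> (F k)))" by (rule \<psi>_sum) (use Fc in auto)
  finally show ?thesis .
qed

lemma \<psi>_eigenbasis_br_right:
  assumes i: "i \<in> model_index t"
  shows "br (\<psi> (F i)) x = sc (model_wt t i) (\<psi> (F i))"
proof -
  note Fi = weight_eigenbasis_carrier[OF F i]
  have "br (\<psi> (F i)) x = \<psi> (right_mult x (F i))"
    unfolding right_mult_def using \<psi>_\<phi>[OF N_br_left[OF \<psi>_in_N[OF Fi]]] by simp
  also have "\<dots> = sc (model_wt t i) (\<psi> (F i))"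
    unfolding weight_eigenbasis_eigen[OF F i] model_wt_eq_weight by (rule \<psi>_scale[OF Fi])
  finally show ?thesis .
qed

lemma \<psi>_eigenbasis_br_left:
  assumes i: "i \<in> model_index t"
  shows "br x (\<psi> (F i)) = sc (- model_wt t i) (\<psi> (F i))"
proof -
  note Fi = weight_eigenbasis_carrier[OF F i]
  have "br x (\<psi> (F i)) = \<psi> (left_mult x (F i))"
    unfolding left_mult_def using \<psi>_\<phi>[OF N_br_right[OF \<psi>_in_N[OF Fi]]] by simp
  also have "\<dots> = sc (- model_wt t i) (\<psi> (F i))"
    unfolding left_mult_eq_neg_right_mult[OF Fi] weight_eigenbasis_eigen[OF F i] model_wt_eq_weight
    using \<psi>_scale[OF Fi, of "- of_nat (weight t i)"] by simp
  finally show ?thesis .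
qed

end

context
  assumes fin: "fin_dim sc" and dim_R: "V.dim UNIV = V.dim N + 1"
begin

lemma insert_basis_spans:
  assumes E: "V.independent E" "V.span E = N" "card E = model_dim t" "finite E" and z: "z \<notin> N"
  shows "V.independent (insert z E)" "V.span (insert z E) = UNIV"
proof -
  obtain B0 where B0: "finite B0" "V.span B0 = UNIV" using fin by (auto simp: fin_dim_def)
  obtain B where B: "V.independent B" "UNIV \<subseteq> V.span B" using V.basis_exists[of UNIV] by metis
  have "finite B" using V.independent_span_bound[OF B0(1) B(1)] B0(2) by auto
  then interpret R: finite_dimensional_vector_space sc B by unfold_locales (use B in auto)
  have zE: "z \<notin> V.span E" using E z by simp
  show ind: "V.independent (insert z E)" by (rule V.independent_insertI[OF zE E(1)])
  have "z \<notin> E" using zE V.span_base by blast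
  then have "V.dim UNIV \<le> card (insert z E)" using E dim_R dim_N by simp
  then have "UNIV \<subseteq> V.span (insert z E)"
    using R.card_ge_dim_independent[of "insert z E" UNIV] ind by simp
  then show "V.span (insert z E) = UNIV" by auto
qed

lemma complement_decomp:
  assumes y: "y \<notin> N"
  shows "\<exists>c n. n \<in> N \<and> v = sc c y + n"
proof -
  have "v \<in> V.span (insert y ((\<lambda>i. \<psi> (unit_vec i)) ` model_index t))"
    using insert_basis_spans(2)[OF standard_basis _ y] by simp
  then obtain c where "v - sc c y \<in> N" using standard_basis(2) by (auto simp: V.span_insert)
  then show ?thesis by (metis add.commute diff_add_cancel)
qed

lemma br_self_in_N:
  assumes y: "y \<notin> N"
  shows "br y y \<in> N"
proof -
  obtain c n where n: "n \<in> N" and yyn: "br y y = sc c y + n" using complement_decomp[OF y] by blast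
  have "0 = br y (br y y)" using br_br_self by simp
  also have "\<dots> = sc (c * c) y + (sc c n + br y n)"
    unfolding yyn br_add_right br_scale_right by (simp add: V.scale_right_distrib algebra_simps)
  finally have "sc (c * c) y = - (sc c n + br y n)" by (simp only: eq_neg_iff_add_eq_0)
  then have cy: "sc (c * c) y \<in> N" using n by (metis N_add N_br_right N_neg N_scale)
  have "c = 0"
  proof (rule ccontr)
    assume "c \<noteq> 0"
    then have "y = sc (1 / (c * c)) (sc (c * c) y)" by simp
    then show False using N_scale[OF cy] y by metis
  qed
  then show ?thesis using n yyn by simp
qed

lemma normalized_element:
  assumes NR: "is_nilradical sc br N"
  obtains x where "x \<notin> N" "br x x \<in> N" "weight_normalized t (right_mult x)"
proof -
  have "N \<noteq> UNIV" using dim_R by auto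
  then obtain y where y: "y \<notin> N" by blast
  define a where "a = right_mult y (unit_vec 1) 1"
  have tri: "\<forall>i\<in>model_index t. weight_triangular t (right_mult y) a i"
    unfolding a_def using model_derivation_weight_triangular[OF right_mult_derivation valid] by blast
  have "a \<noteq> 0"
    using right_mult_not_weight_nilpotent[OF complement_decomp[OF y] br_self_in_N[OF y] NR y] tri by auto
  define x where "x = sc (1 / a) y"
  have "x \<notin> N"
  proof
    assume "x \<in> N"
    then have "sc a x \<in> N" by (rule N_scale)
    then show False using y \<open>a \<noteq> 0\<close> by (simp add: x_def)
  qed
  moreover have xx: "br x x \<in> N"
    unfolding x_def br_scale_left br_scale_right by (intro N_scale br_self_in_N y)
  moreover have "right_mult x (unit_vec 1) 1 = 1"
  proof -
    have "1 \<in> model_index t" using valid by (cases t) (auto simp: model_index_def)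
    then show ?thesis
      using \<open>a \<noteq> 0\<close> \<phi>_scale[OF N_br_left[OF \<psi>_in_N[OF unit_vec_carrier]]]
      by (simp add: right_mult_def x_def br_scale_right a_def)
  qed
  then have "\<forall>i\<in>model_index t. weight_triangular t (right_mult x) 1 i"
    using model_derivation_weight_triangular[OF right_mult_derivation[of x] valid] by auto
  then have "weight_normalized t (right_mult x)"
    using valid model_derivation_linear[OF right_mult_derivation] by (simp add: weight_normalized_def)
  ultimately show ?thesis by (rule that)
qed

lemma exists_adapted_basis:
  assumes NR: "is_nilradical sc br N"
  shows "\<exists>(e :: nat \<Rightarrow> 'a) x.
      inj_on e (model_index t) \<and> x \<notin> e ` model_index t \<and>
      V.independent (insert x (e ` model_index t)) \<and> V.span (insert x (e ` model_index t)) = UNIV \<and>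
      V.span (e ` model_index t) = N \<and>
      (\<forall>i\<in>model_index t. \<forall>j\<in>model_index t.
          br (e i) (e j) = (\<Sum>k\<in>model_index t. sc (model_sc t i j k) (e k))) \<and>
      (\<forall>i\<in>model_index t. br (e i) x = sc (model_wt t i) (e i) \<and> br x (e i) = sc (- model_wt t i) (e i)) \<and>
      br x x = 0"
proof -
  obtain x where x: "x \<notin> N" and xx: "br x x \<in> N" and g: "weight_normalized t (right_mult x)"
    using normalized_element[OF NR] by blast
  obtain F where F: "weight_eigenbasis t (right_mult x) F" using weight_eigenbasis_exists[OF g] by blast
  note Fc = weight_eigenbasis_carrier[OF F]
  have basis: "inj_on (\<lambda>i. \<psi> (F i)) (model_index t)" "V.independent ((\<lambda>i. \<psi> (F i)) ` model_index t)"
    "V.span ((\<lambda>i. \<psi> (F i)) ` model_index t) = N" "card ((\<lambda>i. \<psi> (F i)) ` model_index t) = model_dim t"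
    using \<psi>_basis[of F] Fc weight_eigenbasis_independent[OF F] weight_eigenbasis_spans[OF F valid]
    by blast+
  have "x \<notin> (\<lambda>i. \<psi> (F i)) ` model_index t" using x \<psi>_in_N Fc by auto
  then show ?thesis
    using basis insert_basis_spans[OF basis(2-4) _ x] \<psi>_eigenbasis_br[OF g F xx]
      \<psi>_eigenbasis_br_right[OF g F xx] \<psi>_eigenbasis_br_left[OF g F xx] br_self_eq_zero[OF g F xx]
    by (intro exI[of _ "\<lambda>i. \<psi> (F i)"] exI[of _ x]) simp
qed

end

end

theorem theorem3p6:
  fixes sc :: "complex \<Rightarrow> 'a::ab_group_add \<Rightarrow> 'a"
    and br :: "'a \<Rightarrow> 'a \<Rightarrow> 'a"
    and N :: "'a set" and t :: nil_type
  assumes "leibniz_algebra sc br"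
    and "fin_dim sc"
    and "solvable sc br"
    and "is_nilradical sc br N"
    and "nil_valid t"
    and "iso_to_model sc br N t"
    and "vector_space.dim sc (UNIV :: 'a set) = vector_space.dim sc N + 1"
  shows "\<exists>(e :: nat \<Rightarrow> 'a) (x :: 'a).
      inj_on e {1..model_dim t} \<and> x \<notin> e ` {1..model_dim t} \<and>
      module.independent sc (insert x (e ` {1..model_dim t})) \<and>
      module.span sc (insert x (e ` {1..model_dim t})) = UNIV \<and>
      module.span sc (e ` {1..model_dim t}) = N \<and>
      (\<forall>i\<in>{1..model_dim t}. \<forall>j\<in>{1..model_dim t}.
          br (e i) (e j) = (\<Sum>k\<in>{1..model_dim t}. sc (model_sc t i j k) (e k))) \<and>
      (\<forall>i\<in>{1..model_dim t}.
          br (e i) x = sc (model_wt t i) (e i) \<and> br x (e i) = sc (- model_wt t i) (e i)) \<and>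
      br x x = 0"
proof -
  obtain \<phi> :: "'a \<Rightarrow> nat \<Rightarrow> complex" where
    "bij_betw \<phi> N (model_carrier t)"
    "\<forall>u\<in>N. \<forall>v\<in>N. \<phi> (u + v) = (\<lambda>k. \<phi> u k + \<phi> v k)"
    "\<forall>c. \<forall>u\<in>N. \<phi> (sc c u) = (\<lambda>k. c * \<phi> u k)"
    "\<forall>u\<in>N. \<forall>v\<in>N. \<phi> (br u v) = model_br t (\<phi> u) (\<phi> v)"
    using assms(6) unfolding iso_to_model_def by blast
  moreover have "is_ideal sc br N" using assms(4) by (simp add: is_nilradical_def)
  ultimately interpret model_iso sc br N t \<phi>
    by unfold_locales (use assms(1,5) in auto)
  show ?thesis using exists_adapted_basis[OF assms(2,7,4)] by (simp add: model_index_def)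
qed

end
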